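(* None of the graph properties $\mathsf{NON\text{-}EULERIAN}$, $\mathsf{HAMILTONIAN}$, $\mathsf{NON\text{-}HAMILTONIAN}$ belongs to $\mathrm{NLP}$.
   Context: Graphs. All graphs are finite, nonempty, simple, undirected and connected, and labeled: a graph is a triple $G=(V(G),E(G),\lambda_G)$ with labeling $\lambda_G:V(G)\to\{0,1\}^*$. $\mathsf{GRAPH}$ is the set of all graphs. A graph property is a subset of $\mathsf{GRAPH}$ closed under label-preserving isomorphism. $N^G_r(u)$ denotes the subgraph of $G$ induced by the nodes at distance at most $r$ from $u$. $\mathsf{EULERIAN}$ is the set of graphs containing a closed walk using every edge exactly once; $\mathsf{HAMILTONIAN}$ is the set of graphs containing a cycle through every node exactly once (labels irrelevant in both); $\mathsf{NON\text{-}EULERIAN}=\mathsf{GRAPH}\setminus\mathsf{EULERIAN}$ and $\mathsf{NON\text{-}HAMILTONIAN}=\mathsf{GRAPH}\setminus\mathsf{HAMILTONIAN}$. Identifiers and certificates. An identifier assignment of $G$ is a map $\mathrm{id}:V(G)\to\{0,1\}^*$; it is $r$-locally unique if $\mathrm{id}(u)\neq\mathrm{id}(v)$ for all distinct nodes $u,v$ at distance at most $2r$. Identifiers are ordered lexicographically (a proper prefix is smaller). A certificate assignment is a map $\kappa:V(G)\to\{0,1\}^*$; for $r\in\mathbb N$ and $p:\mathbb N\to\mathbb N$ it is $(r,p)$-bounded (w.r.t. $(G,\mathrm{id})$) if $|\kappa(u)|\le p\big(\sum_{v\in N^G_r(u)}(1+|\lambda_G(v)|+|\mathrm{id}(v)|)\big)$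 for every node $u$. Distributed Turing machines. Such a machine $M$ is a Turing machine with three one-way-infinite tapes (receiving, internal, sending) over the alphabet $\{\vdash,\square,\#,0,1\}$ (left-end marker, blank, separator, bits), with designated states start, pause, stop. It is executed on a graph $G$ under an (at least $1$-locally unique) identifier assignment $\mathrm{id}$ and a certificate assignment $\kappa$: every node runs its own copy of $M$ in synchronous rounds. In each round, a node $u$ whose neighbors are $v_1,\dots,v_d$ in increasing identifier order (i) gets $m_1\#\cdots\#m_d\#$ on its receiving tape, where $m_i$ is the message sent to it by $v_i$ in the previous round (empty in the first round); (ii) its sending tape is emptied, its internal tape is initialized to $\lambda_G(u)\#\mathrm{id}(u)\#\kappa(u)$ in the first round and otherwise keeps its content, and, unless $u$ reached stop in an earlier round, $M$ runs from state start with all heads leftmost until it enters pause or stop; (iii) $u$ sends to $v_i$ the $i$-th $\#$-separated bit string on its sending tape (the empty string if there is none). The execution terminates once all nodes are in stop; $G$ is accepted, written $M(G,\mathrm{id},\kappa)\equiv\mathrm{accept}$, if at that point every node has exactly the bit string $1$ on its internal tape (symbols other than $0,1$ ignored). A local-polynomial machine is a distributed Turing machine for which there are a constant $c$ and a polynomial $q$ such that, on every graph and under all identifier and certificate assignments, all nodes reach stop within $c$ rounds, and in every round every node makes at most $q(n)$ computation steps, $n$ being the total length of its receiving- and internal-tape contents at the beginning of the round. $\mathrm{NLP}$ is the class of graph properties $P$ for which there exist a local-polynomial machine $M$, constants $r_{\mathrm{id}},r\ge 1$ and a polynomial $p$ such that for every graph $G$ and every $r_{\mathrm{id}}$-locally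 unique identifier assignment $\mathrm{id}$ of $G$: $G\in P\iff\exists\kappa\,:\,M(G,\mathrm{id},\kappa)\equiv\mathrm{accept}$, $\kappa$ ranging over $(r,p)$-bounded certificate assignments of $(G,\mathrm{id})$. *)

theory Defs
  imports Main "HOL-Library.List_Lexorder" "HOL-Computational_Algebra.Polynomial"
begin

text \<open>Vertices are natural numbers; every finite graph is isomorphic to one of this form.
  Bit strings are bool lists (False = 0, True = 1).\<close>

record lgraph =
  verts :: "nat set"
  adj   :: "nat \<Rightarrow> nat \<Rightarrow> bool"
  lab   :: "nat \<Rightarrow> bool list"

fun near :: "lgraph \<Rightarrow> nat \<Rightarrow> nat \<Rightarrow> nat \<Rightarrow> bool" where
  "near G 0 u v = (u \<in> verts G \<and> v = u)"
| "near G (Suc k) u v = (near G k u v \<or> (\<exists>w. near G k u w \<and> adj G w v))"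

definition GRAPH :: "lgraph set" where
  "GRAPH = {G. finite (verts G) \<and> verts G \<noteq> {}
     \<and> (\<forall>u v. adj G u v \<longrightarrow> u \<in> verts G \<and> v \<in> verts G)
     \<and> (\<forall>u v. adj G u v = adj G v u)
     \<and> (\<forall>u. \<not> adj G u u)
     \<and> (\<forall>u\<in>verts G. \<forall>v\<in>verts G. \<exists>k. near G k u v)}"

definition graph_iso :: "lgraph \<Rightarrow> lgraph \<Rightarrow> bool" where
  "graph_iso G H = (\<exists>f. bij_betw f (verts G) (verts H)
     \<and> (\<forall>u\<in>verts G. \<forall>v\<in>verts G. adj G u v = adj H (f u) (f v))
     \<and> (\<forall>u\<in>verts G. lab H (f u) = lab G u))"

definition graph_property :: "lgraph set \<Rightarrow> bool" where
  "graph_property P = (P \<subseteq> GRAPH \<and> (\<forall>G H. G \<in> P \<longrightarrow> H \<in> GRAPH \<longrightarrow> graph_iso G H \<longrightarrow> H \<in> P))"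

definition edges :: "lgraph \<Rightarrow> nat set set" where
  "edges G = {{u, v} | u v. adj G u v}"

definition EULERIAN :: "lgraph set" where
  "EULERIAN = {G \<in> GRAPH. \<exists>w. w \<noteq> [] \<and> hd w = last w \<and> set w \<subseteq> verts G
     \<and> (\<forall>i < length w - 1. adj G (w ! i) (w ! Suc i))
     \<and> distinct (map (\<lambda>i. {w ! i, w ! Suc i}) [0..<length w - 1])
     \<and> set (map (\<lambda>i. {w ! i, w ! Suc i}) [0..<length w - 1]) = edges G}"

definition HAMILTONIAN :: "lgraph set" where
  "HAMILTONIAN = {G \<in> GRAPH. \<exists>c. distinct c \<and> length c \<ge> 3 \<and> set c = verts G
     \<and> (\<forall>i < length c - 1. adj G (c ! i) (c ! Suc i)) \<and> adj G (last c) (hd c)}"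

definition NON_EULERIAN :: "lgraph set" where
  "NON_EULERIAN = GRAPH - EULERIAN"

definition NON_HAMILTONIAN :: "lgraph set" where
  "NON_HAMILTONIAN = GRAPH - HAMILTONIAN"

definition locally_unique :: "nat \<Rightarrow> lgraph \<Rightarrow> (nat \<Rightarrow> bool list) \<Rightarrow> bool" where
  "locally_unique r G idf = (\<forall>u\<in>verts G. \<forall>v\<in>verts G.
      u \<noteq> v \<and> near G (2 * r) u v \<longrightarrow> idf u \<noteq> idf v)"

definition cert_bounded :: "nat \<Rightarrow> nat poly \<Rightarrow> lgraph \<Rightarrow> (nat \<Rightarrow> bool list)
    \<Rightarrow> (nat \<Rightarrow> bool list) \<Rightarrow> bool" where
  "cert_bounded r p G idf \<kappa> = (\<forall>u\<in>verts G. length (\<kappa> u) \<le>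
     poly p (\<Sum>v\<in>{v. near G r u v}. 1 + length (lab G v) + length (idf v)))"

text \<open>Neighbors in increasing identifier order (lexicographic order on bool lists from
  List_Lexorder: a proper prefix is smaller, False < True).\<close>
definition nbrs :: "lgraph \<Rightarrow> (nat \<Rightarrow> bool list) \<Rightarrow> nat \<Rightarrow> nat list" where
  "nbrs G idf u = (SOME ns. distinct ns \<and> set ns = {v. adj G u v}
      \<and> sorted_wrt (\<lambda>a b. idf a < idf b) ns)"

datatype sym = LEnd | Blank | Sep | Zero | One
datatype mv = MvL | MvR | MvS

record dtm =
  states   :: "nat set"
  start_st :: nat
  pause_st :: nat
  stop_st  :: nat
  delta    :: "nat \<Rightarrow> sym \<times> sym \<times> sym \<Rightarrow> nat \<times> (sym \<times> sym \<times> sym) \<times> (mv \<times> mv \<times> mv)"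

definition wf_dtm :: "dtm \<Rightarrow> bool" where
  "wf_dtm M = (finite (states M) \<and> start_st M \<in> states M \<and> pause_st M \<in> states M
     \<and> stop_st M \<in> states M \<and> pause_st M \<noteq> stop_st M
     \<and> (\<forall>q\<in>states M. \<forall>a. fst (delta M q a) \<in> states M))"

text \<open>A tape: the cells 1,2,... as a list (blanks beyond), cell 0 holds the left-end
  marker, and the head position.\<close>
type_synonym tape = "sym list \<times> nat"

definition read_tape :: "tape \<Rightarrow> sym" where
  "read_tape t = (case t of (cs, p) \<Rightarrow>
     if p = 0 then LEnd else if p - 1 < length cs then cs ! (p - 1) else Blank)"

definition write_tape :: "sym \<Rightarrow> tape \<Rightarrow> tape" where
  "write_tape s t = (case t of (cs, p) \<Rightarrow>
     if p = 0 then (cs, p) else ((cs @ replicate (p - length cs) Blank)[p - 1 := s], p))"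

definition move_tape :: "mv \<Rightarrow> tape \<Rightarrow> tape" where
  "move_tape m t = (case t of (cs, p) \<Rightarrow>
     (case m of MvL \<Rightarrow> (cs, p - 1) | MvR \<Rightarrow> (cs, Suc p) | MvS \<Rightarrow> (cs, p)))"

text \<open>Configuration: state, receiving tape, internal tape, sending tape.\<close>
type_synonym cfg = "nat \<times> tape \<times> tape \<times> tape"

definition halted :: "dtm \<Rightarrow> nat \<Rightarrow> bool" where
  "halted M q = (q = pause_st M \<or> q = stop_st M)"

definition step :: "dtm \<Rightarrow> cfg \<Rightarrow> cfg" where
  "step M c = (case c of (q, a, b, d) \<Rightarrow>
     if halted M q then c else
     (case delta M q (read_tape a, read_tape b, read_tape d) of
        (q', (x, y, z), (m1, m2, m3)) \<Rightarrow>
          (q', move_tape m1 (write_tape x a), move_tape m2 (write_tape y b),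
               move_tape m3 (write_tape z d))))"

definition run_steps :: "dtm \<Rightarrow> nat \<Rightarrow> cfg \<Rightarrow> cfg" where
  "run_steps M k c = (step M ^^ k) c"

definition halts_within :: "dtm \<Rightarrow> cfg \<Rightarrow> nat \<Rightarrow> bool" where
  "halts_within M c k = (\<exists>j\<le>k. halted M (fst (run_steps M j c)))"

definition run_result :: "dtm \<Rightarrow> cfg \<Rightarrow> cfg" where
  "run_result M c = run_steps M (LEAST j. halted M (fst (run_steps M j c))) c"

definition content :: "sym list \<Rightarrow> sym list" where
  "content cs = rev (dropWhile (\<lambda>s. s = Blank) (rev cs))"

definition enc :: "bool list \<Rightarrow> sym list" where
  "enc bs = map (\<lambda>b. if b then One else Zero) bs"

definition bits_of :: "sym list \<Rightarrow> bool list" where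
  "bits_of cs = map (\<lambda>s. s = One) (filter (\<lambda>s. s = Zero \<or> s = One) cs)"

fun split_sep :: "sym list \<Rightarrow> sym list list" where
  "split_sep [] = [[]]"
| "split_sep (x # xs) = (if x = Sep then [] # split_sep xs
                         else (let r = split_sep xs in (x # hd r) # tl r))"

text \<open>Node state: (reached stop, internal tape cells, messages to send to the neighbors).\<close>
type_synonym nstate = "bool \<times> sym list \<times> bool list list"

definition init_state :: "lgraph \<Rightarrow> (nat \<Rightarrow> bool list) \<Rightarrow> (nat \<Rightarrow> bool list) \<Rightarrow> nat \<Rightarrow> nstate" where
  "init_state G idf \<kappa> u = (False, enc (lab G u) @ [Sep] @ enc (idf u) @ [Sep] @ enc (\<kappa> u), [])"

definition recv_string :: "bool list list \<Rightarrow> sym list" where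
  "recv_string ms = concat (map (\<lambda>m. enc m @ [Sep]) ms)"

definition round_cfg :: "dtm \<Rightarrow> bool list list \<Rightarrow> nstate \<Rightarrow> cfg" where
  "round_cfg M ms s = (start_st M, (recv_string ms, 0), (fst (snd s), 0), ([], 0))"

definition node_round :: "dtm \<Rightarrow> bool list list \<Rightarrow> nstate \<Rightarrow> nstate" where
  "node_round M ms s = (if fst s then (True, fst (snd s), []) else
     (case run_result M (round_cfg M ms s) of (q, _, (it, _), (st, _)) \<Rightarrow>
        (q = stop_st M, it, map bits_of (split_sep (content st)))))"

definition pos :: "nat list \<Rightarrow> nat \<Rightarrow> nat" where
  "pos ns u = (LEAST i. i < length ns \<and> ns ! i = u)"

definition msg_from :: "lgraph \<Rightarrow> (nat \<Rightarrow> bool list) \<Rightarrow> (nat \<Rightarrow> nstate) \<Rightarrow> nat \<Rightarrow> nat \<Rightarrow> bool list" where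
  "msg_from G idf S v u = (let ss = snd (snd (S v)); i = pos (nbrs G idf v) u in
      if i < length ss then ss ! i else [])"

definition received :: "lgraph \<Rightarrow> (nat \<Rightarrow> bool list) \<Rightarrow> (nat \<Rightarrow> nstate) \<Rightarrow> nat \<Rightarrow> bool list list" where
  "received G idf S u = map (\<lambda>v. msg_from G idf S v u) (nbrs G idf u)"

fun exec :: "dtm \<Rightarrow> lgraph \<Rightarrow> (nat \<Rightarrow> bool list) \<Rightarrow> (nat \<Rightarrow> bool list) \<Rightarrow> nat \<Rightarrow> nat \<Rightarrow> nstate" where
  "exec M G idf \<kappa> 0 = init_state G idf \<kappa>"
| "exec M G idf \<kappa> (Suc t) = (\<lambda>u. node_round M (received G idf (exec M G idf \<kappa> t) u)
                                                 (exec M G idf \<kappa> t u))"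

definition accepts :: "dtm \<Rightarrow> lgraph \<Rightarrow> (nat \<Rightarrow> bool list) \<Rightarrow> (nat \<Rightarrow> bool list) \<Rightarrow> bool" where
  "accepts M G idf \<kappa> = ((\<exists>T. \<forall>u\<in>verts G. fst (exec M G idf \<kappa> T u)) \<and>
     (let T = (LEAST T. \<forall>u\<in>verts G. fst (exec M G idf \<kappa> T u)) in
       \<forall>u\<in>verts G. bits_of (fst (snd (exec M G idf \<kappa> T u))) = [True]))"

definition local_poly :: "dtm \<Rightarrow> bool" where
  "local_poly M = (\<exists>(c::nat) (q::nat poly). \<forall>G\<in>GRAPH. \<forall>idf \<kappa>. locally_unique 1 G idf \<longrightarrow>
     (\<forall>u\<in>verts G. fst (exec M G idf \<kappa> c u)) \<and>
     (\<forall>t. \<forall>u\<in>verts G. \<not> fst (exec M G idf \<kappa> t u) \<longrightarrow>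
        (let S = exec M G idf \<kappa> t; ms = received G idf S u in
         halts_within M (round_cfg M ms (S u))
           (poly q (length (recv_string ms) + length (content (fst (snd (S u)))))))))"

definition NLP :: "lgraph set set" where
  "NLP = {P. graph_property P \<and> (\<exists>M r_id r (p::nat poly). wf_dtm M \<and> local_poly M
     \<and> r_id \<ge> 1 \<and> r \<ge> 1 \<and>
     (\<forall>G\<in>GRAPH. \<forall>idf. locally_unique r_id G idf \<longrightarrow>
        (G \<in> P \<longleftrightarrow> (\<exists>\<kappa>. cert_bounded r p G idf \<kappa> \<and> accepts M G idf \<kappa>))))}"

end

theory Submission
  imports Defs
begin

text \<open>A verifier that halts within c rounds only sees the balls of radius c + 1 around the nodes.
  If every ball of a graph H is mapped onto a ball of a graph G by a map that is bijective on
  stars and preserves labels, identifiers and certificates, then H is accepted whenever G is.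

  For NON-EULERIAN and NON-HAMILTONIAN take a long path, which has both properties, with
  identifiers repeating with a period longer than the uniqueness radius. Since certificates have
  polynomially bounded length, two far apart windows of the path carry the same certificates, and
  closing the path between them yields a cycle that is covered ball by ball by the path. The cycle
  is Eulerian and Hamiltonian but still accepted.

  For HAMILTONIAN take the cycle on 2m nodes with the chord {0, m}. It is Hamiltonian, but its
  double cover, in which the two chords cross between the copies, is not; the covering map
  transfers identifiers and certificates, and the two lifts of a node are at distance m, so the
  lifted identifiers stay locally unique.\<close>

lemma near_mono: "near G k u v \<Longrightarrow> k \<le> k' \<Longrightarrow> near G k' u v"
proof (induction k' arbitrary: v)
  case (Suc k')
  then show ?case by (cases "k = Suc k'") auto
qed simp

lemma near_refl: "u \<in> verts G \<Longrightarrow> near G k u u"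
  using near_mono[of G 0 u u k] by simp

lemma near_snoc: "near G k u x \<Longrightarrow> adj G x y \<Longrightarrow> near G (Suc k) u y"
  by auto

lemma near_trans: "near G a u x \<Longrightarrow> near G b x y \<Longrightarrow> near G (a + b) u y"
proof (induction b arbitrary: y)
  case (Suc b)
  then show ?case
    using near_mono[of G "a + b" u y "a + Suc b"] by (auto intro: near_snoc)
qed simp

lemma near_cons: "adj G u x \<Longrightarrow> u \<in> verts G \<Longrightarrow> near G k x y \<Longrightarrow> near G (Suc k) u y"
  using near_trans[of G 1 u x k y] by auto

lemma near_lipschitz:
  assumes "near G k u v" and "\<And>a b. adj G a b \<Longrightarrow> \<bar>f b - f a\<bar> \<le> (1::int)"
  shows "\<bar>f v - f u\<bar> \<le> int k"
  using assms(1)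
proof (induction k arbitrary: v)
  case (Suc k)
  then show ?case using assms(2) by (fastforce simp: abs_le_iff)
qed simp

lemma near_hom:
  assumes "near G k u v"
    and "\<And>a b. adj G a b \<Longrightarrow> adj G' (f a) (f b)" and "\<And>a. a \<in> verts G \<Longrightarrow> f a \<in> verts G'"
  shows "near G' k (f u) (f v)"
  using assms(1)
proof (induction k arbitrary: v)
  case (Suc k)
  then show ?case using assms(2) by (auto intro: near_snoc)
qed (use assms(3) in simp)

lemma GRAPH_D:
  assumes "G \<in> GRAPH"
  shows "finite (verts G)" "adj G u v \<Longrightarrow> u \<in> verts G" "adj G u v \<Longrightarrow> v \<in> verts G"
    "adj G u v = adj G v u" "\<not> adj G u u"
  using assms unfolding GRAPH_def by auto

lemma GRAPH_connected: "G \<in> GRAPH \<Longrightarrow> u \<in> verts G \<Longrightarrow> v \<in> verts G \<Longrightarrow> \<exists>k. near G k u v"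
  unfolding GRAPH_def by blast

lemma GRAPH_finite_nbrs: "G \<in> GRAPH \<Longrightarrow> finite {v. adj G u v}"
  using GRAPH_D(1,3) by (metis finite_subset mem_Collect_eq subsetI)

lemma near_end: "G \<in> GRAPH \<Longrightarrow> near G k u v \<Longrightarrow> v \<in> verts G"
  by (induction k arbitrary: v) (auto dest: GRAPH_D)

lemma finite_ball: "G \<in> GRAPH \<Longrightarrow> finite {v. near G k u v}"
  using GRAPH_D(1) near_end by (metis finite_subset mem_Collect_eq subsetI)

lemma GRAPH_intro:
  assumes "finite (verts G)" "verts G \<noteq> {}"
    and "\<And>u v. adj G u v \<Longrightarrow> u \<in> verts G \<and> v \<in> verts G"
    and "\<And>u v. adj G u v = adj G v u" and "\<And>u. \<not> adj G u u"
    and "\<And>u v. u \<in> verts G \<Longrightarrow> v \<in> verts G \<Longrightarrow> \<exists>k. near G k u v"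
  shows "G \<in> GRAPH"
  using assms unfolding GRAPH_def by blast

lemma locally_unique_mono:
  "locally_unique r' G idf \<Longrightarrow> r \<le> r' \<Longrightarrow> locally_unique r G idf"
  unfolding locally_unique_def using near_mono by (metis mult_le_mono2)

lemma locally_unique_if_inj_on:
  "inj_on idf (verts G) \<Longrightarrow> locally_unique r G idf"
  unfolding locally_unique_def inj_on_def by blast

lemma locally_unique_inj_on_nbrs:
  assumes "G \<in> GRAPH" "locally_unique 1 G idf"
  shows "inj_on idf {v. adj G u v}"
proof (rule inj_onI)
  fix a b assume a: "a \<in> {v. adj G u v}" and b: "b \<in> {v. adj G u v}" and "idf a = idf b"
  have "a \<in> verts G" "b \<in> verts G" using a b GRAPH_D(3)[OF assms(1)] by auto
  moreover have "near G 2 a b"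
    using a b GRAPH_D(4)[OF assms(1), of u a] near_snoc[of G 1 a u b] \<open>a \<in> verts G\<close>
    by (auto simp: numeral_2_eq_2)
  ultimately show "a = b" using assms(2) \<open>idf a = idf b\<close> unfolding locally_unique_def by auto
qed

lemma nbrs_exists:
  fixes idf :: "nat \<Rightarrow> bool list"
  assumes "finite S" "inj_on idf S"
  shows "\<exists>ns. distinct ns \<and> set ns = S \<and> sorted_wrt (\<lambda>a b. idf a < idf b) ns"
proof (intro exI conjI)
  let ?ns = "sort_key idf (sorted_list_of_set S)"
  show "distinct ?ns" "set ?ns = S" using assms(1) by simp_all
  then have "sorted_wrt (<) (map idf ?ns)"
    using assms(2) by (simp add: strict_sorted_iff distinct_map)
  then show "sorted_wrt (\<lambda>a b. idf a < idf b) ?ns" by (simp add: sorted_wrt_map)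
qed

lemma nbrs_spec:
  assumes "finite {v. adj G u v}" "inj_on idf {v. adj G u v}"
  shows "distinct (nbrs G idf u) \<and> set (nbrs G idf u) = {v. adj G u v}
      \<and> sorted_wrt (\<lambda>a b. idf a < idf b) (nbrs G idf u)"
  unfolding nbrs_def using someI_ex[OF nbrs_exists[OF assms]] .

lemma nbrs_unique:
  assumes "finite {v. adj G u v}" "inj_on idf {v. adj G u v}"
    and "set ns = {v. adj G u v}" "sorted_wrt (\<lambda>a b. idf a < idf b) ns"
  shows "nbrs G idf u = ns"
proof -
  have "map idf (nbrs G idf u) = map idf ns"
    using nbrs_spec[OF assms(1,2)] assms(3,4)
    by (intro strict_sorted_equal) (auto simp: sorted_wrt_map image_set)
  then show ?thesis using nbrs_spec[OF assms(1,2)] assms(2,3) by (simp add: inj_on_map_eq_map)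
qed

lemma pos_map:
  assumes "inj_on F (set xs)" "x \<in> set xs"
  shows "pos (map F xs) (F x) = pos xs x"
  unfolding pos_def using assms by (auto simp: inj_on_eq_iff intro!: arg_cong[where f = Least])

section \<open>Locality of executions\<close>

lemma list_all2_map_eq:
  "list_all2 P xs ys \<Longrightarrow> (\<And>x y. P x y \<Longrightarrow> f x = g y) \<Longrightarrow> map f xs = map g ys"
  by (induction rule: list_all2_induct) auto

lemma exec_eq_if_simulation:
  assumes init: "\<And>m v w. Q m v w \<Longrightarrow> init_state H idH \<kappa>H v = init_state G idG \<kappa>G w"
    and mono: "\<And>m v w. Q (Suc m) v w \<Longrightarrow> Q m v w"
    and ports: "\<And>m v w. Q (Suc m) v w \<Longrightarrow> list_all2 (\<lambda>v' w'. Q m v' w'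
        \<and> pos (nbrs H idH v') v = pos (nbrs G idG w') w) (nbrs H idH v) (nbrs G idG w)"
  shows "Q m v w \<Longrightarrow> exec M H idH \<kappa>H m v = exec M G idG \<kappa>G m w"
proof (induction m arbitrary: v w)
  case (Suc m)
  have "received H idH (exec M H idH \<kappa>H m) v = received G idG (exec M G idG \<kappa>G m) w"
    unfolding received_def msg_from_def
    by (rule list_all2_map_eq[OF ports[OF Suc.prems]]) (use Suc.IH in auto)
  then show ?case using Suc.IH[OF mono[OF Suc.prems]] by simp
qed (use init in simp)

lemma exec_stopped:
  assumes "fst (exec M G idf \<kappa> t u)" "t \<le> t'"
  shows "fst (exec M G idf \<kappa> t' u) \<and> fst (snd (exec M G idf \<kappa> t' u)) = fst (snd (exec M G idf \<kappa> t u))"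
  using assms(2)
proof (induction t')
  case (Suc t')
  then show ?case using assms(1) by (cases "t = Suc t'") (auto simp: node_round_def)
qed (use assms in simp)

lemma accepts_transfer:
  assumes acc: "accepts M G idG \<kappa>G"
    and stopG: "\<forall>w\<in>verts G. fst (exec M G idG \<kappa>G c w)"
    and corr: "\<forall>v\<in>verts H. \<exists>w\<in>verts G. \<forall>t\<le>c. exec M H idH \<kappa>H t v = exec M G idG \<kappa>G t w"
  shows "accepts M H idH \<kappa>H"
proof -
  have stopH: "\<forall>u\<in>verts H. fst (exec M H idH \<kappa>H c u)" using corr stopG by fastforce
  define TH where "TH = (LEAST T. \<forall>u\<in>verts H. fst (exec M H idH \<kappa>H T u))"
  define TG where "TG = (LEAST T. \<forall>u\<in>verts G. fst (exec M G idG \<kappa>G T u))"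
  have TH: "TH \<le> c" "\<forall>u\<in>verts H. fst (exec M H idH \<kappa>H TH u)"
    unfolding TH_def using stopH by (rule Least_le, rule LeastI)
  have "\<exists>T. \<forall>u\<in>verts G. fst (exec M G idG \<kappa>G T u)" using acc unfolding accepts_def by blast
  then have TG: "\<forall>u\<in>verts G. fst (exec M G idG \<kappa>G TG u)" unfolding TG_def by (rule LeastI_ex)
  have accG: "\<forall>u\<in>verts G. bits_of (fst (snd (exec M G idG \<kappa>G TG u))) = [True]"
    using acc unfolding accepts_def TG_def by (simp add: Let_def)
  have "bits_of (fst (snd (exec M H idH \<kappa>H TH u))) = [True]" if u: "u \<in> verts H" for u
  proof -
    obtain w where w: "w \<in> verts G" and eq: "exec M H idH \<kappa>H TH u = exec M G idG \<kappa>G TH w"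
      using corr u TH(1) by blast
    have "fst (exec M G idG \<kappa>G TH w)" using eq TH(2) u by metis
    then have "fst (snd (exec M G idG \<kappa>G TH w)) = fst (snd (exec M G idG \<kappa>G TG w))"
      using exec_stopped[of M G idG \<kappa>G _ w] TG w by (metis le_cases)
    then show ?thesis using eq accG w by simp
  qed
  then show ?thesis unfolding accepts_def TH_def[symmetric] using stopH by (auto simp: Let_def)
qed

definition star_cover :: "lgraph \<Rightarrow> lgraph \<Rightarrow> (nat \<Rightarrow> bool list) \<Rightarrow> (nat \<Rightarrow> bool list)
    \<Rightarrow> (nat \<Rightarrow> bool list) \<Rightarrow> (nat \<Rightarrow> bool list) \<Rightarrow> (nat \<Rightarrow> nat) \<Rightarrow> nat \<Rightarrow> bool" where
  "star_cover H G idH idG \<kappa>H \<kappa>G F u \<longleftrightarrow>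
     lab H u = lab G (F u) \<and> idH u = idG (F u) \<and> \<kappa>H u = \<kappa>G (F u)
     \<and> (\<forall>x. adj H u x \<longrightarrow> adj G (F u) (F x))
     \<and> (\<forall>y. adj G (F u) y \<longrightarrow> (\<exists>x. adj H u x \<and> F x = y))
     \<and> inj_on F {x. adj H u x}"

text \<open>The parameter m counts rounds: the ball covered has radius m + 1.\<close>

definition ball_cover :: "lgraph \<Rightarrow> lgraph \<Rightarrow> (nat \<Rightarrow> bool list) \<Rightarrow> (nat \<Rightarrow> bool list)
    \<Rightarrow> (nat \<Rightarrow> bool list) \<Rightarrow> (nat \<Rightarrow> bool list) \<Rightarrow> nat \<Rightarrow> nat \<Rightarrow> nat \<Rightarrow> bool" where
  "ball_cover H G idH idG \<kappa>H \<kappa>G m v w \<longleftrightarrow> v \<in> verts H \<and>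
     (\<exists>F. F v = w \<and> (\<forall>u. near H (Suc m) v u \<longrightarrow> star_cover H G idH idG \<kappa>H \<kappa>G F u))"

lemma ball_cover_mono:
  assumes "ball_cover H G idH idG \<kappa>H \<kappa>G m' v w" "m \<le> m'"
  shows "ball_cover H G idH idG \<kappa>H \<kappa>G m v w"
proof -
  obtain F where "v \<in> verts H" "F v = w"
    and "\<forall>u. near H (Suc m') v u \<longrightarrow> star_cover H G idH idG \<kappa>H \<kappa>G F u"
    using assms(1) unfolding ball_cover_def by blast
  moreover have "near H (Suc m') v u" if "near H (Suc m) v u" for u
    using near_mono[OF that, of "Suc m'"] assms(2) by (simp del: near.simps)
  ultimately show ?thesis unfolding ball_cover_def by blast
qed

lemma nbrs_star_cover:
  assumes G: "G \<in> GRAPH" and H: "H \<in> GRAPH" and lu: "locally_unique 1 G idG"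
    and sc: "star_cover H G idH idG \<kappa>H \<kappa>G F u"
    and ids: "\<And>x. adj H u x \<Longrightarrow> idH x = idG (F x)"
  shows "set (nbrs H idH u) = {x. adj H u x}" and "map F (nbrs H idH u) = nbrs G idG (F u)"
proof -
  have injF: "inj_on F {x. adj H u x}" and img: "F ` {x. adj H u x} = {y. adj G (F u) y}"
    using sc unfolding star_cover_def by blast+
  have injG: "inj_on idG {y. adj G (F u) y}" by (rule locally_unique_inj_on_nbrs[OF G lu])
  have injH: "inj_on idH {x. adj H u x}"
  proof (rule inj_onI)
    fix a b assume a: "a \<in> {x. adj H u x}" and b: "b \<in> {x. adj H u x}" and "idH a = idH b"
    then have "idG (F a) = idG (F b)" using ids by simp
    moreover have "F a \<in> {y. adj G (F u) y}" "F b \<in> {y. adj G (F u) y}" using a b img by auto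
    ultimately have "F a = F b" using injG by (simp add: inj_on_eq_iff)
    then show "a = b" using injF a b by (simp add: inj_on_eq_iff)
  qed
  note spec = nbrs_spec[OF GRAPH_finite_nbrs[OF H] injH]
  then show "set (nbrs H idH u) = {x. adj H u x}" by blast
  have "sorted_wrt (\<lambda>a b. idG a < idG b) (map F (nbrs H idH u))"
    using spec ids by (auto simp: sorted_wrt_map intro: sorted_wrt_mono_rel[of _ "\<lambda>a b. idH a < idH b"])
  then show "map F (nbrs H idH u) = nbrs G idG (F u)"
    using spec img by (intro nbrs_unique[OF GRAPH_finite_nbrs[OF G] injG, symmetric]) simp_all
qed

lemma list_all2_mapI: "(\<And>x. x \<in> set xs \<Longrightarrow> P x (F x)) \<Longrightarrow> list_all2 P xs (map F xs)"
  by (induction xs) auto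

text \<open>Routing a message needs the port of the sender at the receiver, which is determined by the
  identifiers of the receiver's neighbours. This is why a node's state after m rounds depends on
  its ball of radius m + 1 rather than m.\<close>

lemma ball_cover_ports:
  assumes G: "G \<in> GRAPH" and H: "H \<in> GRAPH" and lu: "locally_unique 1 G idG"
    and cov: "ball_cover H G idH idG \<kappa>H \<kappa>G (Suc m) v w"
  shows "list_all2 (\<lambda>v' w'. ball_cover H G idH idG \<kappa>H \<kappa>G m v' w'
      \<and> pos (nbrs H idH v') v = pos (nbrs G idG w') w) (nbrs H idH v) (nbrs G idG w)"
proof -
  obtain F where Fv: "F v = w" and v: "v \<in> verts H"
    and sc: "\<And>u. near H (Suc (Suc m)) v u \<Longrightarrow> star_cover H G idH idG \<kappa>H \<kappa>G F u"
    using cov unfolding ball_cover_def by blast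
  have near1: "near H (Suc (Suc m)) v x" if "adj H v x" for x
    using near_cons[OF that v near_refl[OF GRAPH_D(3)[OF H that]]] by simp
  have near2: "near H (Suc (Suc m)) v y" if "adj H v x" "adj H x y" for x y
  proof -
    have "near H (Suc (Suc 0)) v y"
      using near_snoc[OF near_cons[OF that(1) v near_refl[of x H 0]] that(2)] GRAPH_D(3)[OF H that(1)]
      by simp
    then show ?thesis by (rule near_mono) simp
  qed
  have idsF: "idH x = idG (F x)" if "near H (Suc (Suc m)) v x" for x
    using sc[OF that] unfolding star_cover_def by blast
  note nbrs_v = nbrs_star_cover[OF G H lu sc[OF near_refl[OF v]] idsF[OF near1]]
  have "nbrs G idG w = map F (nbrs H idH v)" using nbrs_v(2) Fv by simp
  then show ?thesis
  proof (simp only:, intro list_all2_mapI conjI)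
    fix x assume "x \<in> set (nbrs H idH v)"
    then have x: "adj H v x" using nbrs_v(1) by simp
    show "ball_cover H G idH idG \<kappa>H \<kappa>G m x (F x)"
      unfolding ball_cover_def using GRAPH_D(3)[OF H x] sc near_cons[OF x v] by blast
    have scx: "star_cover H G idH idG \<kappa>H \<kappa>G F x" using sc near1[OF x] by blast
    note nbrs_x = nbrs_star_cover[OF G H lu scx idsF[OF near2[OF x]]]
    have "v \<in> set (nbrs H idH x)" using nbrs_x(1) x GRAPH_D(4)[OF H] by simp
    moreover have "inj_on F (set (nbrs H idH x))" using scx nbrs_x(1) unfolding star_cover_def by simp
    ultimately show "pos (nbrs H idH x) v = pos (nbrs G idG (F x)) w"
      using pos_map[of F "nbrs H idH x" v] nbrs_x(2) Fv by simp
  qed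
qed

lemma exec_eq_if_ball_cover:
  assumes "G \<in> GRAPH" "H \<in> GRAPH" "locally_unique 1 G idG"
  shows "ball_cover H G idH idG \<kappa>H \<kappa>G m v w \<Longrightarrow> exec M H idH \<kappa>H m v = exec M G idG \<kappa>G m w"
proof (rule exec_eq_if_simulation[where Q = "ball_cover H G idH idG \<kappa>H \<kappa>G"])
  fix m v w assume "ball_cover H G idH idG \<kappa>H \<kappa>G m v w"
  then show "init_state H idH \<kappa>H v = init_state G idG \<kappa>G w"
    unfolding ball_cover_def star_cover_def init_state_def using near_refl by fastforce
qed (auto intro: ball_cover_mono ball_cover_ports[OF assms])

lemma poly_nat_mono: "(x::nat) \<le> y \<Longrightarrow> poly (p::nat poly) x \<le> poly p y"
  by (induction p rule: pCons_induct) (auto intro: mult_mono)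

lemma cert_bounded_transfer:
  assumes cb: "cert_bounded r p G idG \<kappa>G"
    and lG: "\<forall>v. lab G v = []" and lH: "\<forall>v. lab H v = []"
    and iG: "\<forall>v. length (idG v) = B" and iH: "\<forall>v. length (idH v) = B"
    and corr: "\<forall>u\<in>verts H. \<exists>w\<in>verts G. \<kappa>H u = \<kappa>G w
                 \<and> card {v. near G r w v} \<le> card {v. near H r u v}"
  shows "cert_bounded r p H idH \<kappa>H"
  unfolding cert_bounded_def
proof
  fix u assume "u \<in> verts H"
  then obtain w where w: "w \<in> verts G" "\<kappa>H u = \<kappa>G w"
      and card: "card {v. near G r w v} \<le> card {v. near H r u v}"
    using corr by blast
  have "length (\<kappa>H u) \<le> poly p (card {v. near G r w v} * (1 + B))"
    using cb w lG iG unfolding cert_bounded_def by simp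
  also have "\<dots> \<le> poly p (card {v. near H r u v} * (1 + B))"
    using card by (intro poly_nat_mono mult_le_mono1)
  finally show "length (\<kappa>H u) \<le> poly p (\<Sum>v\<in>{v. near H r u v}. 1 + length (lab H v) + length (idH v))"
    using lH iH by simp
qed

lemma ball_star_cover_image:
  assumes H: "H \<in> GRAPH" and sc: "\<And>x. x \<in> verts H \<Longrightarrow> star_cover H G idH idG \<kappa>H \<kappa>G F x"
    and u: "u \<in> verts H"
  shows "{y. near G d (F u) y} \<subseteq> F ` {x. near H d u x}"
proof
  fix y assume "y \<in> {y. near G d (F u) y}"
  then show "y \<in> F ` {x. near H d u x}"
  proof (induction d arbitrary: y)
    case 0
    then show ?case using u by auto
  next
    case (Suc d)
    then consider "near G d (F u) y" | w where "near G d (F u) w" "adj G w y" by auto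
    then show ?case
    proof cases
      case 1
      then show ?thesis using Suc.IH near_mono[of H d u _ "Suc d"] by (fastforce simp del: near.simps)
    next
      case 2
      then obtain x' where x': "near H d u x'" "F x' = w" using Suc.IH by blast
      then obtain x where "adj H x' x" "F x = y"
        using sc[OF near_end[OF H x'(1)]] 2(2) unfolding star_cover_def by blast
      then show ?thesis using near_snoc[OF x'(1)] by blast
    qed
  qed
qed

lemma card_ball_star_cover:
  assumes H: "H \<in> GRAPH" and sc: "\<And>x. x \<in> verts H \<Longrightarrow> star_cover H G idH idG \<kappa>H \<kappa>G F x"
    and u: "u \<in> verts H"
  shows "card {y. near G d (F u) y} \<le> card {x. near H d u x}"
  using card_mono[OF _ ball_star_cover_image[OF assms]] card_image_le[OF finite_ball[OF H]]
    finite_imageI[OF finite_ball[OF H]] le_trans by blast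

definition local_verification :: "lgraph set \<Rightarrow> nat \<Rightarrow> nat \<Rightarrow> nat poly \<Rightarrow> nat \<Rightarrow> bool" where
  "local_verification P r_id r p c \<longleftrightarrow> (\<forall>G idG. G \<in> P \<longrightarrow> locally_unique r_id G idG \<longrightarrow>
     (\<exists>\<kappa>G. cert_bounded r p G idG \<kappa>G \<and>
        (\<forall>H idH \<kappa>H. H \<in> GRAPH \<longrightarrow> locally_unique r_id H idH \<longrightarrow> cert_bounded r p H idH \<kappa>H
           \<longrightarrow> (\<forall>v\<in>verts H. \<exists>w\<in>verts G. ball_cover H G idH idG \<kappa>H \<kappa>G c v w) \<longrightarrow> H \<in> P)))"

lemma local_verificationE:
  assumes "local_verification P r_id r p c" "G \<in> P" "locally_unique r_id G idG"
  obtains \<kappa>G where "cert_bounded r p G idG \<kappa>G"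
    and "\<And>H idH \<kappa>H. H \<in> GRAPH \<Longrightarrow> locally_unique r_id H idH \<Longrightarrow> cert_bounded r p H idH \<kappa>H
      \<Longrightarrow> (\<And>v. v \<in> verts H \<Longrightarrow> \<exists>w\<in>verts G. ball_cover H G idH idG \<kappa>H \<kappa>G c v w) \<Longrightarrow> H \<in> P"
proof -
  obtain \<kappa>G where cb: "cert_bounded r p G idG \<kappa>G"
    and closed: "\<forall>H idH \<kappa>H. H \<in> GRAPH \<longrightarrow> locally_unique r_id H idH \<longrightarrow> cert_bounded r p H idH \<kappa>H
      \<longrightarrow> (\<forall>v\<in>verts H. \<exists>w\<in>verts G. ball_cover H G idH idG \<kappa>H \<kappa>G c v w) \<longrightarrow> H \<in> P"
    using assms unfolding local_verification_def by blast
  show thesis by (rule that[OF cb]) (use closed in blast)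
qed

text \<open>The verifier halts within c rounds, so after c rounds a node of H is in the same state as
  the node of G covering its ball of radius c + 1.\<close>

lemma NLP_local_verification:
  assumes "P \<in> NLP"
  shows "\<exists>r_id r p c. 1 \<le> r_id \<and> local_verification P r_id r p c"
proof -
  obtain M r_id r p where lp: "local_poly M" and rid: "1 \<le> r_id"
    and property: "graph_property P"
    and ch: "\<forall>G\<in>GRAPH. \<forall>idf. locally_unique r_id G idf \<longrightarrow>
        (G \<in> P \<longleftrightarrow> (\<exists>\<kappa>. cert_bounded r p G idf \<kappa> \<and> accepts M G idf \<kappa>))"
    using assms unfolding NLP_def by blast
  obtain c where stop: "\<forall>G\<in>GRAPH. \<forall>idf \<kappa>. locally_unique 1 G idf \<longrightarrow>
      (\<forall>u\<in>verts G. fst (exec M G idf \<kappa> c u))"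
    using lp unfolding local_poly_def by blast
  have "local_verification P r_id r p c"
    unfolding local_verification_def
  proof (intro allI impI)
    fix G idG assume GP: "G \<in> P" and luG: "locally_unique r_id G idG"
    have G: "G \<in> GRAPH" using GP property unfolding graph_property_def by blast
    have lu1: "locally_unique 1 G idG" using locally_unique_mono[OF luG rid] .
    obtain \<kappa>G where cb: "cert_bounded r p G idG \<kappa>G" and acc: "accepts M G idG \<kappa>G"
      using ch G luG GP by blast
    have "H \<in> P" if H: "H \<in> GRAPH" and luH: "locally_unique r_id H idH"
      and cbH: "cert_bounded r p H idH \<kappa>H"
      and cov: "\<forall>v\<in>verts H. \<exists>w\<in>verts G. ball_cover H G idH idG \<kappa>H \<kappa>G c v w" for H idH \<kappa>H
    proof -
      have "exec M H idH \<kappa>H t v = exec M G idG \<kappa>G t w"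
        if "ball_cover H G idH idG \<kappa>H \<kappa>G c v w" "t \<le> c" for t v w
        using exec_eq_if_ball_cover[OF G H lu1 ball_cover_mono[OF that]] .
      then have corr: "\<forall>v\<in>verts H. \<exists>w\<in>verts G. \<forall>t\<le>c. exec M H idH \<kappa>H t v = exec M G idG \<kappa>G t w"
        using cov by fast
      have "accepts M H idH \<kappa>H"
        using stop G lu1 by (intro accepts_transfer[OF acc _ corr]) blast
      then show "H \<in> P" using ch H luH cbH by blast
    qed
    then show "\<exists>\<kappa>G. cert_bounded r p G idG \<kappa>G \<and>
        (\<forall>H idH \<kappa>H. H \<in> GRAPH \<longrightarrow> locally_unique r_id H idH \<longrightarrow> cert_bounded r p H idH \<kappa>H
           \<longrightarrow> (\<forall>v\<in>verts H. \<exists>w\<in>verts G. ball_cover H G idH idG \<kappa>H \<kappa>G c v w) \<longrightarrow> H \<in> P)"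
      using cb by blast
  qed
  then show ?thesis using rid by blast
qed

definition cycG :: "nat \<Rightarrow> lgraph" where
  "cycG L = \<lparr>verts = {..<L}, adj = (\<lambda>u v. u < L \<and> v < L \<and> (v = Suc u mod L \<or> u = Suc v mod L)),
     lab = (\<lambda>_. [])\<rparr>"

definition pathG :: "nat \<Rightarrow> lgraph" where
  "pathG N = \<lparr>verts = {..<N}, adj = (\<lambda>u v. u < N \<and> v < N \<and> (v = Suc u \<or> u = Suc v)),
     lab = (\<lambda>_. [])\<rparr>"

lemma verts_cycG [simp]: "verts (cycG L) = {..<L}"
  and lab_cycG [simp]: "lab (cycG L) = (\<lambda>_. [])"
  and adj_cycG: "adj (cycG L) u v \<longleftrightarrow> u < L \<and> v < L \<and> (v = Suc u mod L \<or> u = Suc v mod L)"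
  by (simp_all add: cycG_def)

lemma verts_pathG [simp]: "verts (pathG N) = {..<N}"
  and lab_pathG [simp]: "lab (pathG N) = (\<lambda>_. [])"
  and adj_pathG: "adj (pathG N) u v \<longleftrightarrow> u < N \<and> v < N \<and> (v = Suc u \<or> u = Suc v)"
  by (simp_all add: pathG_def)

lemma adj_cycG_int:
  "adj (cycG L) u v \<longleftrightarrow> u < L \<and> v < L \<and>
     (int v = (int u + 1) mod int L \<or> int v = (int u - 1) mod int L)"
proof -
  have succ: "a = Suc b mod L \<longleftrightarrow> int a = (int b + 1) mod int L" if "a < L" for a b
    using that by (metis of_nat_Suc zmod_int add.commute of_nat_eq_iff)
  have "int u = (int v + 1) mod int L \<longleftrightarrow> int v = (int u - 1) mod int L" if "u < L" "v < L"
  proof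
    assume "int u = (int v + 1) mod int L"
    then have "(int u - 1) mod int L = int v mod int L" by (simp add: mod_diff_left_eq)
    then show "int v = (int u - 1) mod int L" using that by simp
  next
    assume "int v = (int u - 1) mod int L"
    then have "(int v + 1) mod int L = int u mod int L" by (simp add: mod_add_left_eq)
    then show "int u = (int v + 1) mod int L" using that by simp
  qed
  then show ?thesis unfolding adj_cycG using succ by blast
qed

lemma adj_cycG_iff:
  "u < L \<Longrightarrow> adj (cycG L) u x \<longleftrightarrow> x = nat ((int u + 1) mod int L) \<or> x = nat ((int u - 1) mod int L)"
  unfolding adj_cycG_int by (auto simp: nat_less_iff)

lemma cycG_near_offset:
  "near (cycG L) d u v \<Longrightarrow> \<exists>z. \<bar>z\<bar> \<le> int d \<and> int v = (int u + z) mod int L"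
proof (induction d arbitrary: v)
  case 0
  then show ?case by (intro exI[of _ 0]) auto
next
  case (Suc d)
  then consider "near (cycG L) d u v" | w where "near (cycG L) d u w" "adj (cycG L) w v" by auto
  then show ?case
  proof cases
    case 1
    then show ?thesis using Suc.IH by force
  next
    case 2
    then obtain z where z: "\<bar>z\<bar> \<le> int d" "int w = (int u + z) mod int L"
      using Suc.IH by blast
    have "(int w + 1) mod int L = (int u + (z + 1)) mod int L"
      unfolding z(2) by (simp add: mod_add_left_eq add.assoc)
    moreover have "(int w - 1) mod int L = (int u + (z - 1)) mod int L"
      unfolding z(2) by (simp add: mod_diff_left_eq algebra_simps)
    ultimately have "int v = (int u + (z + 1)) mod int L \<or> int v = (int u + (z - 1)) mod int L"
      using 2(2) unfolding adj_cycG_int by simp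
    moreover have "\<bar>z + 1\<bar> \<le> int (Suc d)" "\<bar>z - 1\<bar> \<le> int (Suc d)" using z(1) by auto
    ultimately show ?thesis by blast
  qed
qed

lemma cycG_near_shift:
  assumes "u < L" "\<bar>z\<bar> \<le> int d"
  shows "near (cycG L) d u (nat ((int u + z) mod int L))"
  using assms(2)
proof (induction d arbitrary: z)
  case 0
  then show ?case using assms(1) by simp
next
  case (Suc d)
  show ?case
  proof (cases "\<bar>z\<bar> \<le> int d")
    case True
    then show ?thesis using near_mono[OF Suc.IH[OF True]] by (simp del: near.simps)
  next
    case False
    define z' where "z' = z - sgn z"
    have z': "\<bar>z'\<bar> \<le> int d" "z = z' + 1 \<or> z = z' - 1"
      using False Suc.prems unfolding z'_def by (auto simp: sgn_if)
    have L: "0 < int L" using assms(1) by simp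
    have "((int u + z') mod int L + 1) mod int L = (int u + (z' + 1)) mod int L"
      by (simp add: mod_add_left_eq add.assoc)
    moreover have "((int u + z') mod int L - 1) mod int L = (int u + (z' - 1)) mod int L"
      by (simp add: mod_diff_left_eq algebra_simps)
    ultimately have "adj (cycG L) (nat ((int u + z') mod int L)) (nat ((int u + z) mod int L))"
      unfolding adj_cycG_int using L z'(2) by (auto simp: nat_less_iff)
    then show ?thesis using Suc.IH[OF z'(1)] by (rule near_snoc[rotated])
  qed
qed

lemma cycG_GRAPH:
  assumes "2 \<le> L"
  shows "cycG L \<in> GRAPH"
proof (rule GRAPH_intro)
  fix u v assume "u \<in> verts (cycG L)" "v \<in> verts (cycG L)"
  then have "u < L" "v < L" by simp_all
  then have "near (cycG L) (nat \<bar>int v - int u\<bar>) u (nat ((int u + (int v - int u)) mod int L))"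
    by (intro cycG_near_shift) auto
  then show "\<exists>k. near (cycG L) k u v" using \<open>v < L\<close> by auto
next
  fix u show "\<not> adj (cycG L) u u"
  proof
    assume "adj (cycG L) u u"
    then have "u < L" "u = Suc u mod L" by (simp_all add: adj_cycG)
    then show False using assms by (cases "Suc u = L") auto
  qed
qed (use assms in \<open>auto simp: adj_cycG lessThan_empty_iff\<close>)

lemma pathG_near_dist: "near (pathG N) d u v \<Longrightarrow> \<bar>int v - int u\<bar> \<le> int d"
  by (erule near_lipschitz) (auto simp: adj_pathG)

lemma pathG_near_up: "u + d < N \<Longrightarrow> near (pathG N) d u (u + d)"
  by (induction d) (auto simp: adj_pathG intro: near_snoc)

lemma pathG_near_down: "u < N \<Longrightarrow> near (pathG N) d u (u - d)"
proof (induction d)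
  case (Suc d)
  show ?case
  proof (cases "d < u")
    case True
    then have "adj (pathG N) (u - d) (u - Suc d)" using Suc.prems by (auto simp: adj_pathG)
    then show ?thesis using Suc by (auto intro: near_snoc simp del: near.simps)
  next
    case False
    then show ?thesis using near_mono[OF Suc.IH[OF Suc.prems], of "Suc d"] by (simp del: near.simps)
  qed
qed simp

lemma pathG_GRAPH:
  assumes "1 \<le> N"
  shows "pathG N \<in> GRAPH"
proof (rule GRAPH_intro)
  fix u v assume "u \<in> verts (pathG N)" "v \<in> verts (pathG N)"
  then show "\<exists>k. near (pathG N) k u v"
    using pathG_near_up[of u "v - u" N] pathG_near_down[of u N "u - v"]
    by (cases "u \<le> v") auto
qed (use assms in \<open>auto simp: adj_pathG lessThan_empty_iff\<close>)

lemma card_ball_pathG: "card {v. near (pathG N) r w v} \<le> 2 * r + 1"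
proof -
  have "{v. near (pathG N) r w v} \<subseteq> {w - r..w + r}"
    using pathG_near_dist by fastforce
  then have "card {v. near (pathG N) r w v} \<le> card {w - r..w + r}" by (rule card_mono[rotated]) simp
  also have "\<dots> \<le> 2 * r + 1" by simp
  finally show ?thesis .
qed

lemma cert_length_pathG:
  assumes "cert_bounded r p (pathG N) idf \<kappa>" "\<And>v. length (idf v) = B" "w < N"
  shows "length (\<kappa> w) \<le> poly p ((2 * r + 1) * (1 + B))"
proof -
  have "length (\<kappa> w) \<le> poly p (card {v. near (pathG N) r w v} * (1 + B))"
    using assms unfolding cert_bounded_def by simp
  also have "\<dots> \<le> poly p ((2 * r + 1) * (1 + B))"
    by (intro poly_nat_mono mult_le_mono1 card_ball_pathG)
  finally show ?thesis .
qed

lemma card_ball_cycG: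
  assumes "k < L" "2 * r < L"
  shows "2 * r + 1 \<le> card {v. near (cycG L) r k v}"
proof -
  define f where "f z = nat ((int k + z) mod int L)" for z
  have "f ` {- int r..int r} \<subseteq> {v. near (cycG L) r k v}"
    unfolding f_def using cycG_near_shift[OF assms(1)] by auto
  moreover have "inj_on f {- int r..int r}"
  proof (rule inj_onI)
    fix z z' assume "z \<in> {- int r..int r}" "z' \<in> {- int r..int r}" "f z = f z'"
    then have "int L dvd z' - z" "\<bar>z' - z\<bar> < int L"
      using assms(2) unfolding f_def by (auto simp: mod_eq_dvd_iff nat_eq_iff2)
    then show "z = z'" using dvd_imp_le_int[of "z' - z" "int L"] by (cases "z' - z = 0") auto
  qed
  moreover have "{v. near (cycG L) r k v} \<subseteq> {..<L}"
  proof
    fix v assume "v \<in> {v. near (cycG L) r k v}"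
    then obtain z where "int v = (int k + z) mod int L" using cycG_near_offset by blast
    then have "int v < int L" using assms(1) by simp
    then show "v \<in> {..<L}" by simp
  qed
  then have "finite {v. near (cycG L) r k v}" by (rule finite_subset) simp
  ultimately have "card (f ` {- int r..int r}) \<le> card {v. near (cycG L) r k v}"
    by (intro card_mono)
  moreover have "card (f ` {- int r..int r}) = 2 * r + 1"
    using card_image[OF \<open>inj_on f {- int r..int r}\<close>] by simp
  ultimately show ?thesis by simp
qed

section \<open>Hamiltonian and Eulerian graphs\<close>

text \<open>The neighbours on a Hamiltonian cycle form a connected spanning 2-regular subgraph.\<close>

definition cycle_nbrs :: "lgraph \<Rightarrow> (nat \<Rightarrow> nat set) \<Rightarrow> bool" where
  "cycle_nbrs G N \<longleftrightarrow> (\<forall>x\<in>verts G. \<exists>a b. a \<noteq> b \<and> N x = {a, b})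
     \<and> (\<forall>x\<in>verts G. \<forall>y\<in>N x. adj G x y \<and> x \<in> N y)
     \<and> (\<forall>S. S \<inter> verts G \<noteq> {} \<longrightarrow> (\<forall>x\<in>S \<inter> verts G. N x \<subseteq> S) \<longrightarrow> verts G \<subseteq> S)"

lemma cyclic_induct:
  assumes "i0 < l" "P i0" "\<And>i. i < l \<Longrightarrow> P i \<Longrightarrow> P (Suc i mod l)" "p < l"
  shows "P p"
proof -
  have "P ((i0 + j) mod l)" for j
  proof (induction j)
    case (Suc j)
    then show ?case using assms(1) assms(3)[of "(i0 + j) mod l"] by (simp add: mod_Suc_eq)
  qed (use assms(1,2) in simp)
  from this[of "p + l - i0"] show ?thesis using assms(1,4) by simp
qed

lemma HAMILTONIAN_cyclic_list:
  assumes "G \<in> HAMILTONIAN"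
  obtains c where "distinct c" "3 \<le> length c" "set c = verts G"
    and "\<And>i. i < length c \<Longrightarrow> adj G (c ! i) (c ! (Suc i mod length c))"
proof -
  obtain c where "distinct c" "3 \<le> length c" "set c = verts G"
    and step: "\<forall>i < length c - 1. adj G (c ! i) (c ! Suc i)" and close: "adj G (last c) (hd c)"
    using assms unfolding HAMILTONIAN_def by blast
  moreover have "adj G (c ! i) (c ! (Suc i mod length c))" if "i < length c" for i
  proof (cases "Suc i < length c")
    case True
    then show ?thesis using step by simp
  next
    case False
    then have "Suc i = length c" using that by simp
    then have "i = length c - 1" "Suc i mod length c = 0" by auto
    moreover have "c \<noteq> []" using that by auto
    ultimately show ?thesis using close by (simp add: last_conv_nth hd_conv_nth)
  qed
  ultimately show thesis using that by blast
qed

lemma HAMILTONIAN_cycle_nbrs: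
  assumes "G \<in> HAMILTONIAN"
  shows "\<exists>N. cycle_nbrs G N"
proof -
  obtain c where dist: "distinct c" and l3: "3 \<le> length c" and set: "set c = verts G"
    and step: "\<And>i. i < length c \<Longrightarrow> adj G (c ! i) (c ! (Suc i mod length c))"
    using HAMILTONIAN_cyclic_list[OF assms] by blast
  have G: "G \<in> GRAPH" using assms unfolding HAMILTONIAN_def by blast
  define l where "l = length c"
  define nx where "nx i = Suc i mod l" for i
  define pv where "pv i = (i + l - 1) mod l" for i
  have l: "3 \<le> l" using l3 unfolding l_def .
  have nx_pv_less: "nx i < l" "pv i < l" for i unfolding nx_def pv_def using l by simp_all
  have nx_pv: "nx (pv i) = i" "pv (nx i) = i" if "i < l" for i
    using that l unfolding nx_def pv_def by (auto simp: mod_if)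
  have nx_neq_pv: "nx i \<noteq> pv i" if "i < l" for i
    using that l unfolding nx_def pv_def by (auto simp: mod_if split: if_splits)
  have index: "c ! i = c ! j \<longleftrightarrow> i = j" if "i < l" "j < l" for i j
    using dist that unfolding l_def by (simp add: nth_eq_iff_index_eq)
  have adj_nx: "adj G (c ! i) (c ! nx i)" if "i < l" for i
    using step that unfolding nx_def l_def .
  have adj_pv: "adj G (c ! i) (c ! pv i)" if "i < l" for i
    using adj_nx[OF nx_pv_less(2)] nx_pv(1)[OF that] GRAPH_D(4)[OF G] by metis
  have at: "\<exists>i<l. c ! i = x" if "x \<in> verts G" for x
    using that set unfolding l_def by (metis in_set_conv_nth)
  define N where "N x = {c ! nx (THE i. i < l \<and> c ! i = x), c ! pv (THE i. i < l \<and> c ! i = x)}" for x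
  have N: "N (c ! i) = {c ! nx i, c ! pv i}" if "i < l" for i
  proof -
    have "(THE j. j < l \<and> c ! j = c ! i) = i" using that index by (intro the_equality) auto
    then show ?thesis unfolding N_def by simp
  qed
  have "cycle_nbrs G N"
    unfolding cycle_nbrs_def
  proof (intro conjI ballI allI impI)
    fix x assume "x \<in> verts G"
    then obtain i where "i < l" "x = c ! i" using at by blast
    then show "\<exists>a b. a \<noteq> b \<and> N x = {a, b}" using N index nx_neq_pv nx_pv_less by metis
  next
    fix x y assume "x \<in> verts G" "y \<in> N x"
    then obtain i where i: "i < l" "x = c ! i" using at by blast
    then have "y = c ! nx i \<or> y = c ! pv i" using \<open>y \<in> N x\<close> N by auto
    then show "adj G x y" "x \<in> N y" using i N nx_pv nx_pv_less adj_nx adj_pv by auto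
  next
    fix S assume "S \<inter> verts G \<noteq> {}" and closed: "\<forall>x\<in>S \<inter> verts G. N x \<subseteq> S"
    then obtain i0 where i0: "i0 < l" "c ! i0 \<in> S" using at by blast
    have closed_step: "c ! nx i \<in> S" if "i < l" "c ! i \<in> S" for i
    proof -
      have "c ! i \<in> verts G" using that(1) set unfolding l_def by (metis nth_mem)
      then have "N (c ! i) \<subseteq> S" using closed that(2) by blast
      then show ?thesis using N[OF that(1)] by simp
    qed
    show "verts G \<subseteq> S"
    proof
      fix x assume "x \<in> verts G"
      then obtain p where "p < l" "x = c ! p" using at by blast
      then show "x \<in> S" using cyclic_induct[of i0 l "\<lambda>i. c ! i \<in> S"] i0 closed_step unfolding nx_def by blast
    qed
  qed
  then show ?thesis by blast
qed

lemma
  assumes "cycle_nbrs G N" "x \<in> verts G"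
  shows cycle_nbrs_pair: "\<exists>a b. a \<noteq> b \<and> N x = {a, b}"
    and cycle_nbrs_adj: "y \<in> N x \<Longrightarrow> adj G x y"
    and cycle_nbrs_sym: "y \<in> N x \<Longrightarrow> x \<in> N y"
  using assms(2) conjunct1[OF assms(1)[unfolded cycle_nbrs_def]]
    conjunct1[OF conjunct2[OF assms(1)[unfolded cycle_nbrs_def]]] by blast+

lemma cycle_nbrs_closed:
  assumes "cycle_nbrs G N" "S \<inter> verts G \<noteq> {}" "\<And>x. x \<in> S \<Longrightarrow> x \<in> verts G \<Longrightarrow> N x \<subseteq> S"
  shows "verts G \<subseteq> S"
  using assms(2,3) conjunct2[OF conjunct2[OF assms(1)[unfolded cycle_nbrs_def]]] by blast

lemma cycle_nbrs_forced:
  assumes "cycle_nbrs G N" "w \<in> verts G" "\<And>y. adj G w y \<Longrightarrow> y \<in> {a, b}"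
  shows "N w = {a, b}"
proof -
  obtain p q where "p \<noteq> q" "N w = {p, q}" using cycle_nbrs_pair[OF assms(1,2)] by blast
  moreover have "p \<in> {a, b}" "q \<in> {a, b}"
    using cycle_nbrs_adj[OF assms(1,2)] assms(3) \<open>N w = {p, q}\<close> by auto
  ultimately show ?thesis by auto
qed

lemma not_HAMILTONIAN_if_degree_one:
  assumes "x \<in> verts G" and "\<And>z. adj G x z \<longleftrightarrow> z = y"
  shows "G \<notin> HAMILTONIAN"
proof
  assume "G \<in> HAMILTONIAN"
  then obtain N where N: "cycle_nbrs G N" using HAMILTONIAN_cycle_nbrs by blast
  obtain a b where "a \<noteq> b" "N x = {a, b}" using cycle_nbrs_pair[OF N assms(1)] by blast
  moreover have "adj G x a" "adj G x b" using cycle_nbrs_adj[OF N assms(1)] \<open>N x = {a, b}\<close> by auto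
  ultimately show False using assms(2) by simp
qed

lemma not_EULERIAN_if_degree_one:
  assumes G: "G \<in> GRAPH" and one: "\<And>z. adj G x z \<longleftrightarrow> z = y"
  shows "G \<notin> EULERIAN"
proof
  assume "G \<in> EULERIAN"
  then obtain w where ne: "w \<noteq> []" and closed: "hd w = last w"
    and walk: "\<forall>i < length w - 1. adj G (w ! i) (w ! Suc i)"
    and dist: "distinct (map (\<lambda>i. {w ! i, w ! Suc i}) [0..<length w - 1])"
    and all: "set (map (\<lambda>i. {w ! i, w ! Suc i}) [0..<length w - 1]) = edges G"
    unfolding EULERIAN_def by blast
  define E where "E i = {w ! i, w ! Suc i}" for i
  define k where "k = length w - 1"
  have E_inj: "i = j" if "i < k" "j < k" "E i = E j" for i j
    using dist that unfolding E_def k_def by (simp add: distinct_conv_nth) blast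
  have E_x: "E j = {x, y}" if "j < k" "w ! j = x \<or> w ! Suc j = x" for j
    using that walk one GRAPH_D(4)[OF G] unfolding E_def k_def by (metis insert_commute)
  have "{x, y} \<in> edges G" using one unfolding edges_def by blast
  then have "{x, y} \<in> E ` {0..<k}" using all unfolding E_def k_def by simp
  then obtain i where "i < k" "E i = {x, y}" by auto
  then have i: "i < k" "x \<in> E i" by auto
  text \<open>x cannot be visited in the middle of the walk, as that would use its only edge twice.\<close>
  have ends: "w ! 0 = x \<and> w ! k = x"
  proof -
    have "w ! i = x \<or> w ! Suc i = x" using i(2) unfolding E_def by auto
    then obtain p where p: "p \<le> k" "w ! p = x" using i(1) by (metis Suc_leI less_imp_le)
    show ?thesis
    proof (cases "0 < p \<and> p < k")
      case True
      then have "p - 1 < k" "Suc (p - 1) = p" by auto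
      then have "E (p - 1) = {x, y}" using E_x[of "p - 1"] p(2) by simp
      moreover have "E p = {x, y}" using E_x[of p] True p(2) by simp
      ultimately have "p - 1 = p" using E_inj[of "p - 1" p] True by auto
      then show ?thesis using True by linarith
    next
      case False
      then have "p = 0 \<or> p = k" using p by linarith
      then show ?thesis using closed p ne unfolding k_def by (auto simp: hd_conv_nth last_conv_nth)
    qed
  qed
  have "E 0 = E (k - 1)" using E_x[of 0] E_x[of "k - 1"] ends i(1) by simp
  then have "k = 1" using E_inj[of 0 "k - 1"] i(1) by simp
  then show False using walk ends GRAPH_D(5)[OF G] unfolding k_def by (metis One_nat_def zero_less_one)
qed

lemma HAMILTONIAN_intro:
  assumes "G \<in> GRAPH" "verts G = {..<n}" "3 \<le> n"
    and "\<And>i. Suc i < n \<Longrightarrow> adj G i (Suc i)" and "adj G (n - 1) 0"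
  shows "G \<in> HAMILTONIAN"
  unfolding HAMILTONIAN_def
  using assms by (intro CollectI conjI exI[of _ "[0..<n]"]) (auto simp: last_upt hd_upt)

lemma cycG_HAMILTONIAN: "3 \<le> L \<Longrightarrow> cycG L \<in> HAMILTONIAN"
  by (rule HAMILTONIAN_intro[OF cycG_GRAPH]) (auto simp: adj_cycG)

lemma cycG_EULERIAN:
  assumes L: "3 \<le> L"
  shows "cycG L \<in> EULERIAN"
proof -
  define w where "w = [0..<L] @ [0]"
  have len: "length w - 1 = L" unfolding w_def by simp
  have w: "w ! i = i mod L" if "i \<le> L" for i
    using that unfolding w_def by (auto simp: nth_append)
  define e where "e i = {i, Suc i mod L}" for i
  have walk_edges: "map (\<lambda>i. {w ! i, w ! Suc i}) [0..<length w - 1] = map e [0..<L]"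
    unfolding len by (rule map_cong) (auto simp: e_def w)
  have inj: "inj_on e {..<L}"
  proof (rule inj_onI)
    fix i j assume ij: "i \<in> {..<L}" "j \<in> {..<L}" "e i = e j"
    show "i = j"
    proof (rule ccontr)
      assume "i \<noteq> j"
      then have "i = Suc j mod L" "j = Suc i mod L" using ij(3) unfolding e_def doubleton_eq_iff by auto
      then have "(i + 2) mod L = i mod L" using ij(1) by (simp add: mod_Suc_eq)
      then have "L dvd 2" by (simp add: mod_eq_dvd_iff_nat)
      then show False using L by (simp add: nat_dvd_not_less)
    qed
  qed
  have edges: "edges (cycG L) = e ` {..<L}"
  proof
    show "edges (cycG L) \<subseteq> e ` {..<L}"
      unfolding edges_def e_def by (auto simp: adj_cycG insert_commute)
    have "adj (cycG L) i (Suc i mod L)" if "i < L" for i using that by (simp add: adj_cycG)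
    then show "e ` {..<L} \<subseteq> edges (cycG L)" unfolding edges_def e_def by blast
  qed
  have "distinct (map (\<lambda>i. {w ! i, w ! Suc i}) [0..<length w - 1])"
    unfolding walk_edges using inj by (simp add: distinct_map lessThan_atLeast0)
  moreover have "set (map (\<lambda>i. {w ! i, w ! Suc i}) [0..<length w - 1]) = edges (cycG L)"
    unfolding walk_edges edges by (simp add: lessThan_atLeast0)
  moreover have "adj (cycG L) (w ! i) (w ! Suc i)" if "i < L" for i
    using that w[of i] w[of "Suc i"] by (simp add: adj_cycG)
  ultimately show ?thesis
    unfolding EULERIAN_def using cycG_GRAPH[of L] L len
    by (intro CollectI conjI exI[of _ w]) (auto simp: w_def)
qed

lemma pathG_not_HAMILTONIAN: "2 \<le> N \<Longrightarrow> pathG N \<notin> HAMILTONIAN"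
  by (rule not_HAMILTONIAN_if_degree_one[of 0 _ 1]) (auto simp: adj_pathG)

lemma pathG_not_EULERIAN: "2 \<le> N \<Longrightarrow> pathG N \<notin> EULERIAN"
  by (rule not_EULERIAN_if_degree_one[OF pathG_GRAPH, of _ 0 1]) (auto simp: adj_pathG)

fun bin :: "nat \<Rightarrow> nat \<Rightarrow> bool list" where
  "bin 0 x = []"
| "bin (Suc B) x = odd x # bin B (x div 2)"

lemma length_bin [simp]: "length (bin B x) = B"
  by (induction B arbitrary: x) auto

lemma bin_inj: "x < 2 ^ B \<Longrightarrow> y < 2 ^ B \<Longrightarrow> bin B x = bin B y \<Longrightarrow> x = y"
proof (induction B arbitrary: x y)
  case (Suc B)
  then have "x div 2 = y div 2" "x mod 2 = y mod 2"
    by (auto simp: odd_iff_mod_2_eq_one)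
  then show ?case by (metis div_mult_mod_eq)
qed simp

definition periodic_id :: "nat \<Rightarrow> nat \<Rightarrow> nat \<Rightarrow> bool list" where
  "periodic_id B Pd n = bin B (n mod Pd)"

lemma length_periodic_id [simp]: "length (periodic_id B Pd n) = B"
  by (simp add: periodic_id_def)

lemma locally_unique_periodic_id:
  assumes "0 < Pd" "Pd \<le> 2 ^ B"
    and "\<And>u v. u \<in> verts G \<Longrightarrow> u \<noteq> v \<Longrightarrow> near G (2 * r) u v \<Longrightarrow> u mod Pd \<noteq> v mod Pd"
  shows "locally_unique r G (periodic_id B Pd)"
  unfolding locally_unique_def periodic_id_def
proof (intro ballI impI, elim conjE)
  fix u v assume "u \<in> verts G" "u \<noteq> v" "near G (2 * r) u v"
  moreover have "u mod Pd < 2 ^ B" "v mod Pd < 2 ^ B"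
    using assms(1,2) by (meson mod_less_divisor order_less_le_trans)+
  ultimately show "bin B (u mod Pd) \<noteq> bin B (v mod Pd)" using assms(3) bin_inj by blast
qed

lemma pathG_locally_unique_mod:
  assumes "2 * r < Pd" "Pd \<le> 2 ^ B"
  shows "locally_unique r (pathG N) (periodic_id B Pd)"
proof (rule locally_unique_periodic_id)
  fix u v assume "u \<noteq> v" "near (pathG N) (2 * r) u v"
  then have "int u - int v \<noteq> 0" "\<bar>int u - int v\<bar> < int Pd"
    using pathG_near_dist[of N "2 * r" u v] assms(1) by auto
  show "u mod Pd \<noteq> v mod Pd"
  proof
    assume "u mod Pd = v mod Pd"
    then have "int u mod int Pd = int v mod int Pd" by (metis zmod_int)
    then have "int Pd dvd int u - int v" by (simp add: mod_eq_dvd_iff)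
    from dvd_imp_le_int[OF \<open>int u - int v \<noteq> 0\<close> this]
    show False using \<open>\<bar>int u - int v\<bar> < int Pd\<close> by simp
  qed
qed (use assms in auto)

lemma cycG_locally_unique_mod:
  assumes "2 * r < Pd" "Pd \<le> 2 ^ B" "Pd dvd L"
  shows "locally_unique r (cycG L) (periodic_id B Pd)"
proof (rule locally_unique_periodic_id)
  fix u v assume "u \<in> verts (cycG L)" "u \<noteq> v" "near (cycG L) (2 * r) u v"
  then obtain z where z: "\<bar>z\<bar> \<le> int (2 * r)" "int v = (int u + z) mod int L" "u < L"
    using cycG_near_offset by fastforce
  show "u mod Pd \<noteq> v mod Pd"
  proof
    assume "u mod Pd = v mod Pd"
    then have "int u mod int Pd = (int u + z) mod int Pd"
      using z(2) assms(3) by (metis zmod_int mod_mod_cancel of_nat_dvd_iff)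
    then have "int Pd dvd z" by (simp add: mod_eq_dvd_iff)
    then have "z = 0" using z(1) assms(1) dvd_imp_le_int by force
    then show False using z \<open>u \<noteq> v\<close> by simp
  qed
qed (use assms in auto)

section \<open>Closing a path into a cycle\<close>

text \<open>The bound on N leaves room for more positions Sp, 2 Sp, ... than there are windows of
  bounded certificates, so two of the windows around these positions coincide.\<close>

lemma certificate_window_repeats:
  fixes \<kappa> :: "nat \<Rightarrow> bool list"
  assumes bound: "\<And>w. w < N \<Longrightarrow> length (\<kappa> w) \<le> CB" and h: "h \<le> Sp"
    and N: "Sp * (card {xs. set xs \<subseteq> {b::bool list. length b \<le> CB} \<and> length xs = 2 * h} + 3) \<le> N"
  obtains i L where "Sp dvd i" "Sp dvd L" "Sp \<le> i" "Sp \<le> L" "i + L + Sp \<le> N"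
    and "\<And>x. x < h \<Longrightarrow> \<kappa> (i + x) = \<kappa> (i + L + x) \<and> \<kappa> (i - x) = \<kappa> (i + L - x)"
proof -
  define S where "S = {xs. set xs \<subseteq> {b::bool list. length b \<le> CB} \<and> length xs = 2 * h}"
  define K where "K = card S"
  define wnd where "wnd w = map (\<lambda>x. \<kappa> (w + x)) [0..<h] @ map (\<lambda>x. \<kappa> (w - x)) [0..<h]" for w
  define pos where "pos t = Sp * (t + 1)" for t
  have "finite S" unfolding S_def
    by (rule finite_lists_length_eq) (rule finite_subset[OF _ finite_lists_length_le[of UNIV CB]], auto)
  have pos_N: "pos t + Sp \<le> N - Sp" if "t \<le> K" for t
  proof -
    have "pos t + Sp \<le> Sp * (K + 2)" using that unfolding pos_def by (simp add: algebra_simps)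
    then show ?thesis using N unfolding K_def S_def by (simp add: algebra_simps)
  qed
  have "wnd (pos t) \<in> S" if "t \<le> K" for t
    using bound pos_N[OF that] h unfolding S_def wnd_def by auto
  then have "(wnd \<circ> pos) ` {0..K} \<subseteq> S" by auto
  then have "\<not> inj_on (wnd \<circ> pos) {0..K}"
    using card_inj_on_le[OF _ _ \<open>finite S\<close>, of "wnd \<circ> pos" "{0..K}"] unfolding K_def by auto
  then obtain t t' where tt: "t < t'" "t' \<le> K" "wnd (pos t) = wnd (pos t')"
    unfolding inj_on_def by (metis atLeastAtMost_iff comp_apply linorder_neqE_nat)
  show thesis
  proof (rule that)
    have "pos t' = pos t + Sp * (t' - t)" using tt(1) unfolding pos_def by (simp add: algebra_simps)
    moreover have "Sp \<le> Sp * (t' - t)" using tt(1) by (simp add: Suc_le_eq)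
    ultimately show "pos t + Sp * (t' - t) + Sp \<le> N" "Sp \<le> Sp * (t' - t)"
      using pos_N[OF tt(2)] by linarith+
    fix x assume "x < h"
    have "wnd (pos t) ! x = wnd (pos t') ! x" "wnd (pos t) ! (h + x) = wnd (pos t') ! (h + x)"
      using tt(3) by simp_all
    then show "\<kappa> (pos t + x) = \<kappa> (pos t + Sp * (t' - t) + x)
        \<and> \<kappa> (pos t - x) = \<kappa> (pos t + Sp * (t' - t) - x)"
      using \<open>x < h\<close> \<open>pos t' = pos t + Sp * (t' - t)\<close> unfolding wnd_def by (simp add: nth_append)
  qed (auto simp: pos_def)
qed

locale path_window =
  fixes N L i c Pd B :: nat and \<kappa> :: "nat \<Rightarrow> bool list"
  assumes Pd_dvd_L: "Pd dvd L" and Pd_dvd_i: "Pd dvd i"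
    and L_big: "2 * c + 6 < L" and i_big: "c + 3 \<le> i" and N_big: "i + L + c + 3 < N"
    and window: "\<And>x. x \<le> c + 2 \<Longrightarrow> \<kappa> (i + x) = \<kappa> (i + L + x) \<and> \<kappa> (i - x) = \<kappa> (i + L - x)"
begin

abbreviation idP :: "nat \<Rightarrow> bool list" where
  "idP \<equiv> periodic_id B Pd"

definition \<kappa>C :: "nat \<Rightarrow> bool list" where
  "\<kappa>C u = \<kappa> (i + u)"

text \<open>Unrolls the cycle around k onto the path around i + k, using the representative of
  u - k modulo L of least absolute value.\<close>

definition unroll :: "nat \<Rightarrow> nat \<Rightarrow> nat" where
  "unroll k u = nat (int i + int k +
     (let z = (int u - int k) mod int L in if z \<le> int L div 2 then z else z - int L))"

lemma L_pos: "0 < int L"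
  using L_big by simp

lemma unroll_offset:
  assumes "\<bar>z\<bar> \<le> int c + 2"
  shows "unroll k (nat ((int k + z) mod int L)) = nat (int i + int k + z)"
proof -
  have "(int (nat ((int k + z) mod int L)) - int k) mod int L = z mod int L"
    using L_pos by (simp add: mod_diff_left_eq)
  moreover have "z mod int L = (if 0 \<le> z then z else z + int L)"
  proof (cases "0 \<le> z")
    case True
    then show ?thesis using assms L_big by (simp add: mod_pos_pos_trivial)
  next
    case False
    have "z mod int L = (z + int L) mod int L" by simp
    also have "\<dots> = z + int L" using False assms L_big by (intro mod_pos_pos_trivial) auto
    finally show ?thesis using False by simp
  qed
  moreover have "int c + 2 < int L div 2" "2 * (int L div 2) \<le> int L" using L_big by linarith+
  ultimately show ?thesis
    unfolding unroll_def Let_def using assms by auto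
qed

lemma idP_mod:
  assumes "0 \<le> int i + a"
  shows "idP (nat (a mod int L)) = idP (nat (int i + a))"
proof -
  have "int (nat (a mod int L) mod Pd) = (a mod int L) mod int Pd"
    using L_pos by (simp add: zmod_int)
  also have "\<dots> = a mod int Pd" using Pd_dvd_L by (simp add: mod_mod_cancel)
  also have "\<dots> = (int i + a) mod int Pd" using Pd_dvd_i by (simp add: mod_add_left_eq[symmetric])
  also have "\<dots> = int (nat (int i + a) mod Pd)" using assms by (simp add: zmod_int)
  finally show ?thesis unfolding periodic_id_def by simp
qed

lemma \<kappa>C_mod:
  assumes "- int c - 2 \<le> a" "a < int L + int c + 2"
  shows "\<kappa>C (nat (a mod int L)) = \<kappa> (nat (int i + a))"
proof -
  consider "0 \<le> a" "a < int L" | "int L \<le> a" | "a < 0" by linarith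
  then show ?thesis
  proof cases
    case 1
    then show ?thesis unfolding \<kappa>C_def by (simp add: nat_add_distrib)
  next
    case 2
    define x where "x = nat (a - int L)"
    have "(a - int L) mod int L = a - int L"
      using 2 assms L_big by (intro mod_pos_pos_trivial) linarith+
    then have "a mod int L = int x" using 2 unfolding x_def by simp
    moreover have "x \<le> c + 2" using assms unfolding x_def by simp
    moreover have "nat (int i + a) = i + L + x" using 2 unfolding x_def by simp
    ultimately show ?thesis unfolding \<kappa>C_def using window by simp
  next
    case 3
    define x where "x = nat (- a)"
    have "x \<le> c + 2" using assms unfolding x_def by simp
    have "(a + int L) mod int L = a + int L"
      using 3 assms L_big by (intro mod_pos_pos_trivial) linarith+
    then have "a mod int L = int (L - x)" using 3 \<open>x \<le> c + 2\<close> L_big unfolding x_def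
      by (simp add: of_nat_diff)
    moreover have "nat (int i + a) = i - x" using 3 assms i_big unfolding x_def by simp
    moreover have "i + (L - x) = i + L - x" using \<open>x \<le> c + 2\<close> L_big by simp
    ultimately show ?thesis unfolding \<kappa>C_def using window[OF \<open>x \<le> c + 2\<close>] by simp
  qed
qed

lemma star_cover_window:
  assumes k: "k < L" and z: "\<bar>z\<bar> \<le> int c + 1"
  shows "star_cover (cycG L) (pathG N) idP idP \<kappa>C \<kappa> (unroll k) (nat ((int k + z) mod int L))"
proof -
  define u where "u = nat ((int k + z) mod int L)"
  define g where "g = int i + int k + z"
  have u: "u < L" "int u = (int k + z) mod int L" unfolding u_def using L_pos by (simp_all add: nat_less_iff)
  have g: "2 \<le> g" "g + 1 < int N" unfolding g_def using z i_big N_big k by linarith+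
  have unroll_u: "unroll k u = nat g" unfolding u_def g_def using unroll_offset z by simp
  have "(int u + 1) mod int L = (int k + (z + 1)) mod int L"
    unfolding u(2) by (simp add: mod_add_left_eq add.assoc)
  moreover have "(int u - 1) mod int L = (int k + (z - 1)) mod int L"
    unfolding u(2) by (simp add: mod_diff_left_eq algebra_simps)
  ultimately have nbrs_u: "adj (cycG L) u x \<longleftrightarrow>
      x = nat ((int k + (z + 1)) mod int L) \<or> x = nat ((int k + (z - 1)) mod int L)" for x
    using adj_cycG_iff[OF u(1)] by simp
  have unroll_nbrs: "unroll k (nat ((int k + (z + 1)) mod int L)) = nat (g + 1)"
    "unroll k (nat ((int k + (z - 1)) mod int L)) = nat (g - 1)"
    using unroll_offset[of "z + 1"] unroll_offset[of "z - 1"] z unfolding g_def by (simp_all add: algebra_simps)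
  have path_nbrs: "adj (pathG N) (nat g) y \<longleftrightarrow> y = nat (g + 1) \<or> y = nat (g - 1)" for y
    using g by (auto simp: adj_pathG)
  have "- int c - 2 \<le> int k + z" "int k + z < int L + int c + 2" using z k by linarith+
  then have "\<kappa>C u = \<kappa> (nat g)" unfolding u_def g_def using \<kappa>C_mod by (simp add: add.assoc)
  moreover have "idP u = idP (nat g)" unfolding u_def g_def using idP_mod[of "int k + z"] i_big z
    by (simp add: add.assoc)
  moreover have "nat (g + 1) \<noteq> nat (g - 1)" using g by simp
  ultimately show ?thesis
    unfolding star_cover_def u_def[symmetric] unroll_u
    using nbrs_u unroll_nbrs path_nbrs by (auto simp: inj_on_def)
qed

lemma ball_cover_window:
  assumes "k < L"
  shows "ball_cover (cycG L) (pathG N) idP idP \<kappa>C \<kappa> c k (i + k)"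
  unfolding ball_cover_def
proof (intro conjI exI[of _ "unroll k"] allI impI)
  show "k \<in> verts (cycG L)" "unroll k k = i + k"
    using assms unroll_offset[of 0 k] by simp_all
  fix u assume "near (cycG L) (Suc c) k u"
  then obtain z where "\<bar>z\<bar> \<le> int (Suc c)" "int u = (int k + z) mod int L"
    using cycG_near_offset by blast
  then have "\<bar>z\<bar> \<le> int c + 1" "u = nat ((int k + z) mod int L)" by simp_all
  then show "star_cover (cycG L) (pathG N) idP idP \<kappa>C \<kappa> (unroll k) u"
    using star_cover_window[OF assms] by simp
qed

lemma cert_bounded_cycle:
  assumes "cert_bounded r p (pathG N) idP \<kappa>" "2 * r < L"
  shows "cert_bounded r p (cycG L) idP \<kappa>C"
proof (rule cert_bounded_transfer[OF assms(1)])
  show "\<forall>u\<in>verts (cycG L). \<exists>w\<in>verts (pathG N). \<kappa>C u = \<kappa> w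
      \<and> card {v. near (pathG N) r w v} \<le> card {v. near (cycG L) r u v}"
  proof
    fix u assume "u \<in> verts (cycG L)"
    then have "i + u \<in> verts (pathG N)"
      and "card {v. near (pathG N) r (i + u) v} \<le> card {v. near (cycG L) r u v}"
      using N_big card_ball_pathG[of N r "i + u"] card_ball_cycG[of u L r] assms(2) by auto
    then show "\<exists>w\<in>verts (pathG N). \<kappa>C u = \<kappa> w
        \<and> card {v. near (pathG N) r w v} \<le> card {v. near (cycG L) r u v}"
      unfolding \<kappa>C_def by blast
  qed
qed simp_all

end

lemma not_NLP_if_paths_not_cycles:
  assumes paths: "\<And>N. 2 \<le> N \<Longrightarrow> pathG N \<in> P" and cycles: "\<And>L. 3 \<le> L \<Longrightarrow> cycG L \<notin> P"
  shows "P \<notin> NLP"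
proof
  assume "P \<in> NLP"
  then obtain r_id r p c where rid: "1 \<le> r_id" and P: "local_verification P r_id r p c"
    using NLP_local_verification by blast
  define Pd where "Pd = 2 * r_id + 1"
  define CB where "CB = poly p ((2 * r + 1) * (1 + Pd))"
  define Sp where "Sp = Pd * (2 * c + 2 * r + 7)"
  define N where "N = Sp * (card {xs. set xs \<subseteq> {b::bool list. length b \<le> CB} \<and> length xs = 2 * (c + 3)} + 3)"
  have Sp: "2 * c + 2 * r + 7 \<le> Sp" unfolding Sp_def Pd_def by simp
  have Pd: "2 * r_id < Pd" "Pd \<le> 2 ^ Pd" using less_exp[of Pd] unfolding Pd_def by simp_all
  have "Sp \<le> N" unfolding N_def by simp
  then have "2 \<le> N" using Sp by linarith
  then obtain \<kappa> where cb: "cert_bounded r p (pathG N) (periodic_id Pd Pd) \<kappa>"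
    and closed: "\<And>H idH \<kappa>H. H \<in> GRAPH \<Longrightarrow> locally_unique r_id H idH \<Longrightarrow> cert_bounded r p H idH \<kappa>H
      \<Longrightarrow> (\<And>v. v \<in> verts H \<Longrightarrow> \<exists>w\<in>verts (pathG N).
             ball_cover H (pathG N) idH (periodic_id Pd Pd) \<kappa>H \<kappa> c v w) \<Longrightarrow> H \<in> P"
    using local_verificationE[OF P paths pathG_locally_unique_mod[OF Pd]] by blast
  have "length (\<kappa> w) \<le> CB" if "w < N" for w
    using cert_length_pathG[OF cb _ that] unfolding CB_def by simp
  moreover have "c + 3 \<le> Sp" using Sp by simp
  ultimately obtain i L where "Sp dvd i" "Sp dvd L" "Sp \<le> i" "Sp \<le> L" "i + L + Sp \<le> N"
    and window: "\<And>x. x < c + 3 \<Longrightarrow> \<kappa> (i + x) = \<kappa> (i + L + x) \<and> \<kappa> (i - x) = \<kappa> (i + L - x)"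
    using certificate_window_repeats[of N \<kappa> CB "c + 3" Sp] unfolding N_def by blast
  interpret W: path_window N L i c Pd Pd \<kappa>
  proof
    show "Pd dvd L" "Pd dvd i"
      using \<open>Sp dvd L\<close> \<open>Sp dvd i\<close> unfolding Sp_def by (auto intro: dvd_mult_left)
    show "2 * c + 6 < L" "c + 3 \<le> i" "i + L + c + 3 < N"
      using Sp \<open>Sp \<le> L\<close> \<open>Sp \<le> i\<close> \<open>i + L + Sp \<le> N\<close> by linarith+
    show "\<kappa> (i + x) = \<kappa> (i + L + x) \<and> \<kappa> (i - x) = \<kappa> (i + L - x)" if "x \<le> c + 2" for x
      using window that by simp
  qed
  have L: "3 \<le> L" "2 * r < L" using Sp \<open>Sp \<le> L\<close> by linarith+
  have "cycG L \<in> P"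
  proof (rule closed)
    show "cycG L \<in> GRAPH" using cycG_GRAPH L by simp
    show "locally_unique r_id (cycG L) (periodic_id Pd Pd)"
      using cycG_locally_unique_mod[OF Pd W.Pd_dvd_L] .
    show "cert_bounded r p (cycG L) (periodic_id Pd Pd) W.\<kappa>C"
      using W.cert_bounded_cycle[OF cb L(2)] .
    fix v assume "v \<in> verts (cycG L)"
    then show "\<exists>w\<in>verts (pathG N). ball_cover (cycG L) (pathG N) (periodic_id Pd Pd)
        (periodic_id Pd Pd) W.\<kappa>C \<kappa> c v w"
      using W.ball_cover_window[of v] W.N_big by auto
  qed
  then show False using cycles L by blast
qed

section \<open>A Hamiltonian graph and its non-Hamiltonian double cover\<close>

text \<open>The cycle on 2m nodes with the chord {0, m}, and its double cover: two copies of the cycle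
  whose chords cross between the copies.\<close>

definition chordG :: "nat \<Rightarrow> lgraph" where
  "chordG m = \<lparr>verts = {..<2*m},
     adj = (\<lambda>u v. adj (cycG (2*m)) u v \<or> (u = 0 \<and> v = m) \<or> (u = m \<and> v = 0)),
     lab = (\<lambda>_. [])\<rparr>"

definition dblG :: "nat \<Rightarrow> lgraph" where
  "dblG m = \<lparr>verts = {..<4*m}, adj = (\<lambda>u v. u < 4*m \<and> v < 4*m \<and>
     ((u div (2*m) = v div (2*m) \<and> adj (cycG (2*m)) (u mod (2*m)) (v mod (2*m)))
     \<or> (u div (2*m) \<noteq> v div (2*m) \<and>
        ((u mod (2*m) = 0 \<and> v mod (2*m) = m) \<or> (u mod (2*m) = m \<and> v mod (2*m) = 0))))),
     lab = (\<lambda>_. [])\<rparr>"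

lemma chordG_GRAPH:
  assumes "2 \<le> m"
  shows "chordG m \<in> GRAPH"
proof -
  have C: "cycG (2 * m) \<in> GRAPH" using assms by (intro cycG_GRAPH) simp
  show ?thesis
  proof (rule GRAPH_intro)
    fix u v assume "u \<in> verts (chordG m)" "v \<in> verts (chordG m)"
    then obtain k where "near (cycG (2 * m)) k u v" using GRAPH_connected[OF C] by (auto simp: chordG_def)
    then have "near (chordG m) k (id u) (id v)" by (rule near_hom) (auto simp: chordG_def)
    then show "\<exists>k. near (chordG m) k u v" by auto
  qed (use assms GRAPH_D(4,5)[OF C] in \<open>auto simp: chordG_def adj_cycG lessThan_empty_iff\<close>)
qed

lemma chordG_HAMILTONIAN:
  assumes "2 \<le> m"
  shows "chordG m \<in> HAMILTONIAN"
proof (rule HAMILTONIAN_intro[OF chordG_GRAPH[OF assms], of "2 * m"])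
  have "Suc (2 * m - 1) = 2 * m" using assms by simp
  then show "adj (chordG m) (2 * m - 1) 0" using assms by (simp add: chordG_def adj_cycG)
qed (use assms in \<open>auto simp: chordG_def adj_cycG\<close>)

locale double_cover =
  fixes m n :: nat
  assumes m2: "2 \<le> m" and n_def: "n = 2 * m"
begin

lemma n4: "4 \<le> n" and m_less_n: "Suc m < n"
  using m2 n_def by simp_all

lemma verts_dblG [simp]: "verts (dblG m) = {..<2 * n}"
  using n_def by (simp add: dblG_def)

lemma adj_dblG: "adj (dblG m) u v \<longleftrightarrow> u < 2 * n \<and> v < 2 * n \<and>
     ((u div n = v div n \<and> adj (cycG n) (u mod n) (v mod n))
     \<or> (u div n \<noteq> v div n \<and> ((u mod n = 0 \<and> v mod n = m) \<or> (u mod n = m \<and> v mod n = 0))))"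
  unfolding dblG_def n_def by (simp add: mult.assoc)

lemma verts_chordG [simp]: "verts (chordG m) = {..<n}"
  using n_def by (simp add: chordG_def)

lemma adj_chordG: "adj (chordG m) u v \<longleftrightarrow> adj (cycG n) u v \<or> (u = 0 \<and> v = m) \<or> (u = m \<and> v = 0)"
  unfolding chordG_def n_def by simp

lemma copy_split: "u < 2 * n \<Longrightarrow> u div n \<le> 1 \<and> u = u div n * n + u mod n \<and> u mod n < n"
  using n4 less_mult_imp_div_less[of u 2 n] by (simp add: mult.commute)

lemma copy_adj: "s \<le> 1 \<Longrightarrow> adj (cycG n) a b \<Longrightarrow> adj (dblG m) (s * n + a) (s * n + b)"
  unfolding adj_dblG by (cases s) (auto simp: adj_cycG)

lemma cross_adj: "s \<le> 1 \<Longrightarrow> adj (dblG m) (s * n) ((1 - s) * n + m)"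
  unfolding adj_dblG using m_less_n by (cases s) auto

lemma dblG_GRAPH: "dblG m \<in> GRAPH"
proof -
  have C: "cycG n \<in> GRAPH" using n4 by (intro cycG_GRAPH) simp
  have copy_near: "\<exists>k. near (dblG m) k (s * n + a) (s * n + b)" if sab: "s \<le> 1" "a < n" "b < n" for s a b
  proof -
    obtain k where "near (cycG n) k a b" using GRAPH_connected[OF C] sab by auto
    then have "near (dblG m) k ((\<lambda>x. s * n + x) a) ((\<lambda>x. s * n + x) b)"
      by (rule near_hom) (use sab copy_adj in \<open>auto elim: le_SucE\<close>)
    then show ?thesis by auto
  qed
  show ?thesis
  proof (rule GRAPH_intro)
    fix u v assume "u \<in> verts (dblG m)" "v \<in> verts (dblG m)"
    then have u: "u div n \<le> 1" "u = u div n * n + u mod n" "u mod n < n"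
      and v: "v div n \<le> 1" "v = v div n * n + v mod n" "v mod n < n"
      using copy_split by auto
    show "\<exists>k. near (dblG m) k u v"
    proof (cases "u div n = v div n")
      case True
      then show ?thesis using copy_near[of "u div n" "u mod n" "v mod n"] u v by metis
    next
      case False
      define s where "s = u div n"
      have s: "s \<le> 1" "v div n = 1 - s" using u(1) v(1) False unfolding s_def by auto
      obtain k1 where "near (dblG m) k1 u (s * n)"
        using copy_near[OF s(1) u(3), of 0] u(2) n4 unfolding s_def by auto
      moreover have "near (dblG m) 1 (s * n) ((1 - s) * n + m)"
        using near_snoc[of _ 0, OF _ cross_adj[OF s(1)]] s(1) n4 by (cases s) auto
      moreover obtain k2 where "near (dblG m) k2 ((1 - s) * n + m) v"
        using copy_near[of "1 - s" m "v mod n"] v s m_less_n by auto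
      ultimately show ?thesis using near_trans by blast
    qed
  qed (use GRAPH_D(4,5)[OF C] n4 in \<open>auto simp: adj_dblG lessThan_empty_iff\<close>)
qed

lemma adj_cycG_plain:
  assumes "0 < w" "w < n"
  shows "adj (cycG n) w y \<longleftrightarrow> y = Suc w mod n \<or> y = w - 1"
proof
  assume "adj (cycG n) w y"
  then have "y < n" "y = Suc w mod n \<or> w = Suc y mod n" by (simp_all add: adj_cycG)
  then show "y = Suc w mod n \<or> y = w - 1" using assms by (cases "Suc y = n") auto
next
  assume "y = Suc w mod n \<or> y = w - 1"
  then show "adj (cycG n) w y" using assms by (auto simp: adj_cycG)
qed

lemma adj_dblG_plain:
  assumes "w < n" "w \<noteq> 0" "w \<noteq> m"
  shows "adj (dblG m) w y \<longleftrightarrow> y < n \<and> adj (cycG n) w y"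
proof -
  have "w div n = 0" "w mod n = w" using assms by simp_all
  moreover have "y div n = 0 \<longleftrightarrow> y < n" using n4 by (simp add: div_eq_0_iff)
  ultimately show ?thesis using assms unfolding adj_dblG by auto
qed

text \<open>Nodes of the first copy other than the chord ends have degree two, so a Hamiltonian cycle
  uses both of their edges; then also the chord ends are left only along the first copy, and the
  cycle never reaches the second copy.\<close>

lemma dblG_not_HAMILTONIAN: "dblG m \<notin> HAMILTONIAN"
proof
  assume "dblG m \<in> HAMILTONIAN"
  then obtain N where N: "cycle_nbrs (dblG m) N" using HAMILTONIAN_cycle_nbrs by blast
  have plain: "N w = {Suc w mod n, w - 1}" if "w < n" "w \<noteq> 0" "w \<noteq> m" for w
    using that by (intro cycle_nbrs_forced[OF N]) (auto simp: adj_dblG_plain adj_cycG_plain)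
  have "N x \<subseteq> {..<n}" if x: "x < n" for x
  proof (cases "x = 0 \<or> x = m")
    case False
    have "adj (dblG m) x y" if "y \<in> N x" for y using cycle_nbrs_adj[OF N _ that] x by simp
    then show ?thesis using x False adj_dblG_plain by auto
  next
    case True
    define a b where "a = Suc x" and "b = (if x = 0 then n - 1 else x - 1)"
    have ab: "a < n" "a \<noteq> 0" "a \<noteq> m" "b < n" "b \<noteq> 0" "b \<noteq> m" "a \<noteq> b"
      using True m2 m_less_n unfolding a_def b_def n_def by auto
    have "x \<in> N a" "x \<in> N b"
      using plain ab True m_less_n unfolding a_def b_def n_def by auto
    then have "a \<in> N x" "b \<in> N x" using cycle_nbrs_sym[OF N] ab by auto
    moreover obtain p q where "N x = {p, q}" using cycle_nbrs_pair[OF N, of x] x by auto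
    ultimately have "N x = {a, b}" using ab by auto
    then show ?thesis using ab by auto
  qed
  moreover have "0 \<in> {..<n} \<inter> verts (dblG m)" using n4 by simp
  ultimately have "verts (dblG m) \<subseteq> {..<n}"
    using cycle_nbrs_closed[OF N, of "{..<n}"] by blast
  then show False using n4 by auto
qed

lemma cycG_chord_ends_not_adj: "\<not> adj (cycG n) 0 m" "\<not> adj (cycG n) m 0"
  using m2 n_def by (auto simp: adj_cycG)

lemma inj_on_mod_nbrs_dblG:
  assumes u: "u < 2 * n"
  shows "inj_on (\<lambda>v. v mod n) {x. adj (dblG m) u x}"
proof -
  have no_mix: False if "adj (dblG m) u x" "adj (dblG m) u x'" "x mod n = x' mod n"
    "x div n = u div n" "x' div n \<noteq> u div n" for x x'
  proof -
    have "adj (cycG n) (u mod n) (x mod n)" using that(1,4) unfolding adj_dblG by auto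
    moreover have "u mod n = 0 \<and> x mod n = m \<or> u mod n = m \<and> x mod n = 0"
      using that(2,3,5) unfolding adj_dblG by auto
    ultimately show False using cycG_chord_ends_not_adj by auto
  qed
  show ?thesis
  proof (rule inj_onI)
    fix x x' assume "x \<in> {x. adj (dblG m) u x}" "x' \<in> {x. adj (dblG m) u x}" and e: "x mod n = x' mod n"
    then have x: "adj (dblG m) u x" "adj (dblG m) u x'" by auto
    then have "x < 2 * n" "x' < 2 * n" unfolding adj_dblG by auto
    then have split: "x div n \<le> 1" "x' div n \<le> 1" "x = x div n * n + x mod n" "x' = x' div n * n + x' mod n"
      using copy_split by auto
    show "x = x'"
    proof (rule ccontr)
      assume "x \<noteq> x'"
      then have "x div n \<noteq> x' div n" using split e by metis
      moreover have "u div n \<le> 1" using copy_split[OF u] by simp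
      ultimately consider "x div n = u div n" "x' div n \<noteq> u div n" | "x' div n = u div n" "x div n \<noteq> u div n"
        using split by linarith
      then show False using no_mix x e by cases metis+
    qed
  qed
qed

lemma star_cover_dblG:
  assumes u: "u < 2 * n"
  shows "star_cover (dblG m) (chordG m) (periodic_id B n) (periodic_id B n) (\<lambda>v. \<kappa> (v mod n)) \<kappa>
    (\<lambda>v. v mod n) u"
  unfolding star_cover_def
proof (intro conjI allI impI)
  fix x assume "adj (dblG m) u x"
  then show "adj (chordG m) (u mod n) (x mod n)" unfolding adj_dblG adj_chordG by auto
next
  have du: "u div n \<le> 1" "u mod n < n" using copy_split[OF u] by auto
  fix y assume "adj (chordG m) (u mod n) y"
  then consider "adj (cycG n) (u mod n) y" | "u mod n = 0" "y = m" | "u mod n = m" "y = 0"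
    unfolding adj_chordG by auto
  then show "\<exists>x. adj (dblG m) u x \<and> x mod n = y"
  proof cases
    case 1
    then have "y < n" by (simp add: adj_cycG)
    then show ?thesis using 1 u du unfolding adj_dblG
      by (intro exI[of _ "u div n * n + y"]) (cases "u div n"; simp)
  next
    case 2
    then show ?thesis using u du m_less_n unfolding adj_dblG
      by (intro exI[of _ "(1 - u div n) * n + m"]) (cases "u div n"; simp)
  next
    case 3
    then show ?thesis using u du n4 unfolding adj_dblG
      by (intro exI[of _ "(1 - u div n) * n"]) (cases "u div n"; simp)
  qed
qed (use inj_on_mod_nbrs_dblG[OF u] in \<open>simp_all add: dblG_def chordG_def periodic_id_def\<close>)

lemma ball_cover_dblG:
  assumes "v \<in> verts (dblG m)"
  shows "ball_cover (dblG m) (chordG m) (periodic_id B n) (periodic_id B n)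
    (\<lambda>v. \<kappa> (v mod n)) \<kappa> c v (v mod n)"
  unfolding ball_cover_def
proof (intro conjI exI[of _ "\<lambda>v. v mod n"] allI impI)
  fix u assume "near (dblG m) (Suc c) v u"
  then have "u < 2 * n" using near_end[OF dblG_GRAPH, of "Suc c" v u] by simp
  then show "star_cover (dblG m) (chordG m) (periodic_id B n) (periodic_id B n)
    (\<lambda>v. \<kappa> (v mod n)) \<kappa> (\<lambda>v. v mod n) u" by (rule star_cover_dblG)
qed (use assms in simp_all)

lemma cert_bounded_dblG:
  assumes "cert_bounded r p (chordG m) (periodic_id B n) \<kappa>"
  shows "cert_bounded r p (dblG m) (periodic_id B n) (\<lambda>v. \<kappa> (v mod n))"
proof (rule cert_bounded_transfer[OF assms])
  have "card {y. near (chordG m) r (u mod n) y} \<le> card {x. near (dblG m) r u x}"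
    if "u \<in> verts (dblG m)" for u
    using card_ball_star_cover[OF dblG_GRAPH star_cover_dblG that] by simp
  moreover have "u mod n \<in> verts (chordG m)" for u using n4 by simp
  ultimately show "\<forall>u\<in>verts (dblG m). \<exists>w\<in>verts (chordG m). \<kappa> (u mod n) = \<kappa> w
      \<and> card {v. near (chordG m) r w v} \<le> card {v. near (dblG m) r u v}"
    by blast
qed (simp_all add: chordG_def dblG_def)

text \<open>Two lifts of the same node k are far apart: the cyclic distance to k, replaced by m minus it
  in the second copy, changes by at most one along an edge but differs by m between the lifts.\<close>

definition cyc_dist :: "nat \<Rightarrow> nat \<Rightarrow> int" where
  "cyc_dist a k = min \<bar>int a - int k\<bar> (int n - \<bar>int a - int k\<bar>)"

definition lift_pos :: "nat \<Rightarrow> nat \<Rightarrow> int" where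
  "lift_pos k v = (if v < n then cyc_dist (v mod n) k else int m - cyc_dist (v mod n) k)"

lemma cyc_dist_lipschitz:
  assumes "a < n" "k < n" "adj (cycG n) a b"
  shows "\<bar>cyc_dist b k - cyc_dist a k\<bar> \<le> 1"
proof -
  from assms(3) have "b < n" "b = Suc a mod n \<or> a = Suc b mod n" by (simp_all add: adj_cycG)
  then consider "b = Suc a" | "a = Suc b" | "b = 0" "a = n - 1" | "a = 0" "b = n - 1"
    using assms(1) by (metis mod_less mod_self not_less_eq diff_Suc_1 le_neq_implies_less less_Suc_eq_le)
  then show ?thesis unfolding cyc_dist_def using assms(1,2) \<open>b < n\<close> by cases arith+
qed

lemma lift_pos_lipschitz:
  assumes "k < n" "adj (dblG m) u v"
  shows "\<bar>lift_pos k v - lift_pos k u\<bar> \<le> 1"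
proof -
  have uv: "u < 2 * n" "v < 2 * n" using assms(2) unfolding adj_dblG by auto
  have copy: "x < n \<longleftrightarrow> x div n = 0" if "x < 2 * n" for x using n4 by (simp add: div_eq_0_iff)
  from assms(2) consider "u div n = v div n" "adj (cycG n) (u mod n) (v mod n)"
    | "u div n \<noteq> v div n" "u mod n = 0 \<and> v mod n = m \<or> u mod n = m \<and> v mod n = 0"
    unfolding adj_dblG by blast
  then show ?thesis
  proof cases
    case 1
    then have "u < n \<longleftrightarrow> v < n" using copy uv by simp
    then show ?thesis
      unfolding lift_pos_def using cyc_dist_lipschitz[OF _ assms(1) 1(2)] n4 by (auto simp: abs_minus_commute)
  next
    case 2
    then have "u < n \<longleftrightarrow> \<not> v < n" using copy uv copy_split by (metis le_less_trans less_one nat_less_le)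
    moreover have "cyc_dist 0 k + cyc_dist m k = int m" using assms(1) n_def unfolding cyc_dist_def by arith
    ultimately show ?thesis unfolding lift_pos_def using 2 by auto
  qed
qed

lemma dblG_locally_unique:
  assumes "2 * r < m" "n \<le> 2 ^ B"
  shows "locally_unique r (dblG m) (periodic_id B n)"
proof (rule locally_unique_periodic_id)
  fix u v assume u: "u \<in> verts (dblG m)" and "u \<noteq> v" and near: "near (dblG m) (2 * r) u v"
  have v: "v \<in> verts (dblG m)" using near_end[OF dblG_GRAPH near] .
  show "u mod n \<noteq> v mod n"
  proof
    assume e: "u mod n = v mod n"
    define k where "k = u mod n"
    have k: "k < n" unfolding k_def using n4 by simp
    have "u div n \<noteq> v div n" using \<open>u \<noteq> v\<close> e by (metis div_mult_mod_eq)
    moreover have "u div n \<le> 1" "v div n \<le> 1" using u v copy_split by auto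
    ultimately have "u div n = 0 \<longleftrightarrow> v div n \<noteq> 0" by linarith
    then have "u < n \<longleftrightarrow> \<not> v < n" using n4 by (simp add: div_eq_0_iff)
    moreover have "cyc_dist k k = 0" unfolding cyc_dist_def using n4 by simp
    ultimately have "\<bar>lift_pos k v - lift_pos k u\<bar> = int m" unfolding lift_pos_def k_def using e by auto
    moreover have "\<bar>lift_pos k v - lift_pos k u\<bar> \<le> int (2 * r)"
      using near_lipschitz[OF near lift_pos_lipschitz[OF k]] .
    ultimately show False using assms(1) by linarith
  qed
qed (use assms n4 in auto)

end

lemma HAMILTONIAN_not_NLP: "HAMILTONIAN \<notin> NLP"
proof
  assume "HAMILTONIAN \<in> NLP"
  then obtain r_id r p c where P: "local_verification HAMILTONIAN r_id r p c"
    using NLP_local_verification by blast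
  define m where "m = 2 * r_id + 2"
  define n where "n = 2 * m"
  interpret D: double_cover m n by unfold_locales (simp_all add: m_def n_def)
  have n: "n \<le> 2 ^ n" using less_exp[of n] by simp
  have "inj_on (periodic_id n n) (verts (chordG m))"
  proof (rule inj_onI)
    fix x y assume "x \<in> verts (chordG m)" "y \<in> verts (chordG m)" "periodic_id n n x = periodic_id n n y"
    then show "x = y" using bin_inj[of x n y] n by (simp add: periodic_id_def)
  qed
  then obtain \<kappa> where cb: "cert_bounded r p (chordG m) (periodic_id n n) \<kappa>"
    and closed: "\<And>H idH \<kappa>H. H \<in> GRAPH \<Longrightarrow> locally_unique r_id H idH \<Longrightarrow> cert_bounded r p H idH \<kappa>H
      \<Longrightarrow> (\<And>v. v \<in> verts H \<Longrightarrow> \<exists>w\<in>verts (chordG m).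
             ball_cover H (chordG m) idH (periodic_id n n) \<kappa>H \<kappa> c v w) \<Longrightarrow> H \<in> HAMILTONIAN"
    using local_verificationE[OF P chordG_HAMILTONIAN locally_unique_if_inj_on] D.m2 by metis
  have "dblG m \<in> HAMILTONIAN"
  proof (rule closed)
    show "locally_unique r_id (dblG m) (periodic_id n n)"
      using D.dblG_locally_unique n unfolding m_def by simp
    fix v assume "v \<in> verts (dblG m)"
    then show "\<exists>w\<in>verts (chordG m). ball_cover (dblG m) (chordG m) (periodic_id n n) (periodic_id n n)
        (\<lambda>v. \<kappa> (v mod n)) \<kappa> c v w"
      using D.ball_cover_dblG D.n4 by fastforce
  qed (use D.dblG_GRAPH D.cert_bounded_dblG[OF cb] in auto)
  then show False using D.dblG_not_HAMILTONIAN by blast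
qed

theorem corollary9p6:
  shows "NON_EULERIAN \<notin> NLP \<and> HAMILTONIAN \<notin> NLP \<and> NON_HAMILTONIAN \<notin> NLP"
proof (intro conjI)
  show "NON_EULERIAN \<notin> NLP"
    by (rule not_NLP_if_paths_not_cycles)
      (auto simp: NON_EULERIAN_def pathG_GRAPH pathG_not_EULERIAN cycG_EULERIAN)
  show "HAMILTONIAN \<notin> NLP" by (rule HAMILTONIAN_not_NLP)
  show "NON_HAMILTONIAN \<notin> NLP"
    by (rule not_NLP_if_paths_not_cycles)
      (auto simp: NON_HAMILTONIAN_def pathG_GRAPH pathG_not_HAMILTONIAN cycG_HAMILTONIAN)
qed

end
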